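(* A random permutation $\Pi$ with values in $S_n$ is bi-decomposable if and only if for all pairs of consecutive partitions $\underline{\kappa}=(\underline{\kappa}_1,\ldots,\underline{\kappa}_s)$ and $\underline{\lambda}=(\underline{\lambda}_1,\ldots,\underline{\lambda}_t)$ of $\{1,\ldots,n\}$, the random variables $\Pi_{\underline{\kappa}_i\times\underline{\lambda}_j}$, $1\le i\le s$, $1\le j\le t$, are conditionally independent given the pair $(\{\Pi_{\underline{\kappa}}\},\{\Pi^{-1}_{\underline{\lambda}}\})$.
   Context: $S_n$ is the group of permutations of $\{1,\ldots,n\}$; $\Pi$ is a random element of $S_n$. For a vector $v$, $v\{i:j\}=\{v(i),\ldots,v(j)\}$ and $v(i:j)=(v(i),\ldots,v(j))$. $\Pi$ is called $L$-decomposable if for every $2\le k\le n-2$ and $\pi\in S_n$, $P(\Pi(k+1)=\pi(k+1)\mid \Pi(1:k)=\pi(1:k)) = P(\Pi(k+1)=\pi(k+1)\mid \Pi\{1:k\}=\pi\{1:k\})$ whenever the left side is defined. $\Pi$ is bi-decomposable if both $\Pi$ and $\Pi^{-1}$ are $L$-decomposable. A consecutive partition is given by $0=\kappa_0<\kappa_1<\cdots<\kappa_{s}=n$ with blocks $\underline{\kappa}_i=\{\kappa_{i-1}+1,\ldots,\kappa_i\}$; for $\pi\in S_n$, $\{\pi_{\underline{\kappa}}\}=(\pi\{\kappa_{i-1}+1:\kappa_i\})_{i=1}^{s}$ is the vector of unordered marginals (and similarly $\{\pi^{-1}_{\underline{\lambda}}\}$ for $\pi^{-1}$). For $\pi\in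 S_n$, $\pi_{\underline{\kappa}_i\times\underline{\lambda}_j}=\{(a,\pi(a)): a\in\underline{\kappa}_i,\ \pi(a)\in\underline{\lambda}_j\}$. *)

theory Defs
  imports "HOL-Probability.Probability" "HOL-Combinatorics.Permutations"
begin

text \<open>A random permutation of {1..n} is modelled as a pmf on functions nat => nat
  whose support consists of permutations of {1..n} (identity outside {1..n}).\<close>

definition cprob :: "'a pmf \<Rightarrow> 'a set \<Rightarrow> 'a set \<Rightarrow> real" where
  "cprob p A B = measure_pmf.prob p (A \<inter> B) / measure_pmf.prob p B"

definition L_decomposable :: "nat \<Rightarrow> (nat \<Rightarrow> nat) pmf \<Rightarrow> bool" where
  "L_decomposable n p \<longleftrightarrow>
     (\<forall>k \<pi>. 2 \<le> k \<and> k + 2 \<le> n \<and> \<pi> permutes {1..n} \<and>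
        measure_pmf.prob p {\<sigma>. \<forall>i\<in>{1..k}. \<sigma> i = \<pi> i} > 0 \<longrightarrow>
        cprob p {\<sigma>. \<sigma> (k+1) = \<pi> (k+1)} {\<sigma>. \<forall>i\<in>{1..k}. \<sigma> i = \<pi> i}
        = cprob p {\<sigma>. \<sigma> (k+1) = \<pi> (k+1)} {\<sigma>. \<sigma> ` {1..k} = \<pi> ` {1..k}})"

definition bi_decomposable :: "nat \<Rightarrow> (nat \<Rightarrow> nat) pmf \<Rightarrow> bool" where
  "bi_decomposable n p \<longleftrightarrow> L_decomposable n p \<and> L_decomposable n (map_pmf inv p)"

definition consecutive_partition :: "nat \<Rightarrow> nat \<Rightarrow> (nat \<Rightarrow> nat) \<Rightarrow> bool" where
  "consecutive_partition n s kappa \<longleftrightarrow>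
     kappa 0 = 0 \<and> kappa s = n \<and> (\<forall>i<s. kappa i < kappa (Suc i))"

definition block :: "(nat \<Rightarrow> nat) \<Rightarrow> nat \<Rightarrow> nat set" where
  "block kappa i = {kappa (i - 1) + 1 .. kappa i}"

definition graph_block :: "(nat \<Rightarrow> nat) \<Rightarrow> nat set \<Rightarrow> nat set \<Rightarrow> (nat \<times> nat) set" where
  "graph_block \<pi> K L = {(a, \<pi> a) | a. a \<in> K \<and> \<pi> a \<in> L}"

definition cond_indep_vars ::
  "'a pmf \<Rightarrow> ('i \<Rightarrow> 'a \<Rightarrow> 'b) \<Rightarrow> 'i set \<Rightarrow> ('a \<Rightarrow> 'c) \<Rightarrow> bool" where
  "cond_indep_vars p X I Y \<longleftrightarrow>
     (\<forall>y. measure_pmf.prob p {\<omega>. Y \<omega> = y} > 0 \<longrightarrow>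
        prob_space.indep_vars (measure_pmf (cond_pmf p {\<omega>. Y \<omega> = y}))
          (\<lambda>_. count_space UNIV) X I)"

end

theory Submission
  imports Defs
begin

text \<open>
  L-decomposability gives a chain rule: \<open>P(\<pi>)\<close> is a product of factors
  depending only on \<open>\<pi>{1..k-1}\<close> and \<open>\<pi>(k)\<close>. Hence, if \<open>x\<close> and \<open>z\<close> have the same row
  marginals, replacing \<open>z\<close> by \<open>x\<close> on one row block at a time multiplies out to
  \<open>P(x) P(z)^s = P(z) \<Prod>i P(x on row i, z elsewhere)\<close>. Doing the same for \<open>\<Pi>\<^sup>-\<^sup>1\<close>
  and the column blocks yields, on the fibre of the marginals of \<open>z\<close>, the exchange formula
  \<open>P(x) P(z)^(st) = P(z) \<Prod>c P(x on cell c, z elsewhere)\<close>. Since an element of the fibre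
  is determined by its cell variables and cell-wise choices can be glued back into the
  fibre, this says that the conditional joint law of the cell variables is a product law.

  For \<open>2 \<le> k \<le> n-2\<close> take the rows \<open>{1..k}, {k+1..n}\<close> and a single
  column block: the two cells carry \<open>\<Pi>(1:k)\<close> and \<open>\<Pi>(k+1)\<close>, the marginals carry
  \<open>\<Pi>{1:k}\<close>, and conditional independence is exactly L-decomposability; exchanging rows and
  columns gives L-decomposability of \<open>\<Pi>\<^sup>-\<^sup>1\<close>.
\<close>

section \<open>Consecutive partitions\<close>

lemma partition_strict_mono:
  assumes "consecutive_partition n s kappa" "i < j" "j \<le> s"
  shows "kappa i < kappa j"
  using assms(2,3)
proof (induction j)
  case (Suc j)
  have "kappa j < kappa (Suc j)"
    using assms(1) Suc.prems unfolding consecutive_partition_def by auto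
  then show ?case using Suc by (cases "i = j") auto
qed simp

lemma partition_mono:
  assumes "consecutive_partition n s kappa" "i \<le> j" "j \<le> s"
  shows "kappa i \<le> kappa j"
  using partition_strict_mono[OF assms(1), of i j] assms by (cases "i = j") auto

lemma block_subset:
  assumes "consecutive_partition n s kappa" "i \<in> {1..s}"
  shows "block kappa i \<subseteq> {1..n}"
proof -
  have "kappa i \<le> n"
    using partition_mono[OF assms(1), of i s] assms unfolding consecutive_partition_def by auto
  then show ?thesis unfolding block_def by auto
qed

lemma block_unique:
  assumes "consecutive_partition n s kappa" "i \<in> {1..s}" "i' \<in> {1..s}"
    and "a \<in> block kappa i" "a \<in> block kappa i'"
  shows "i = i'"
proof -
  have False if "i \<in> {1..s}" "i' \<in> {1..s}" "a \<in> block kappa i" "a \<in> block kappa i'" "i < i'"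
    for i i'
  proof -
    have "kappa i \<le> kappa (i' - 1)" using partition_mono[OF assms(1), of i "i' - 1"] that by auto
    then show False using that(3,4) unfolding block_def by auto
  qed
  then show ?thesis using assms(2-5) by (metis linorder_neqE_nat)
qed

lemma block_exists:
  assumes "consecutive_partition n s kappa" "a \<in> {1..n}"
  shows "\<exists>i\<in>{1..s}. a \<in> block kappa i"
proof -
  have ends: "kappa s = n" "kappa 0 = 0" using assms(1) unfolding consecutive_partition_def by auto
  define i where "i = (LEAST i. a \<le> kappa i)"
  have "a \<le> kappa i" unfolding i_def by (rule LeastI[of _ s]) (use ends assms in auto)
  moreover have "i \<le> s" unfolding i_def by (rule Least_le) (use ends assms in auto)
  moreover have "i \<noteq> 0" using \<open>a \<le> kappa i\<close> ends assms by (cases "i = 0") auto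
  moreover have "\<not> a \<le> kappa (i - 1)" unfolding i_def
    by (rule not_less_Least) (use \<open>i \<noteq> 0\<close> in \<open>auto simp: i_def\<close>)
  ultimately show ?thesis unfolding block_def by (intro bexI[of _ i]) auto
qed

definition block_index :: "(nat \<Rightarrow> nat) \<Rightarrow> nat \<Rightarrow> nat \<Rightarrow> nat" where
  "block_index kappa s a = (THE i. i \<in> {1..s} \<and> a \<in> block kappa i)"

lemma block_index_eq:
  assumes "consecutive_partition n s kappa" "i \<in> {1..s}" "a \<in> block kappa i"
  shows "block_index kappa s a = i"
  unfolding block_index_def using assms block_unique[OF assms(1)] by (intro the_equality) auto

lemma block_index:
  assumes "consecutive_partition n s kappa" "a \<in> {1..n}"
  shows "block_index kappa s a \<in> {1..s}" "a \<in> block kappa (block_index kappa s a)"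
  using block_exists[OF assms] block_index_eq[OF assms(1)] by auto

lemma initial_segment_blocks:
  assumes "consecutive_partition n s kappa" "m \<le> s"
  shows "{1..kappa m} = (\<Union>i\<in>{1..m}. block kappa i)"
  using assms(2)
proof (induction m)
  case 0
  then show ?case using assms(1) unfolding consecutive_partition_def by auto
next
  case (Suc m)
  have "kappa m \<le> kappa (Suc m)" using partition_mono[OF assms(1), of m "Suc m"] Suc.prems by auto
  then have "{1..kappa (Suc m)} = {1..kappa m} \<union> block kappa (Suc m)" unfolding block_def by auto
  also have "\<dots> = (\<Union>i\<in>{1..Suc m}. block kappa i)" using Suc by (auto simp: atLeastAtMostSuc_conv)
  finally show ?case .
qed

definition one_block :: "nat \<Rightarrow> nat \<Rightarrow> nat" where
  "one_block n i = (if i = 0 then 0 else n)"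

definition two_blocks :: "nat \<Rightarrow> nat \<Rightarrow> nat \<Rightarrow> nat" where
  "two_blocks n k i = (if i = 0 then 0 else if i = 1 then k else n)"

lemma one_block:
  assumes "0 < n"
  shows "consecutive_partition n 1 (one_block n)" "block (one_block n) 1 = {1..n}"
  using assms by (simp_all add: consecutive_partition_def one_block_def block_def)

lemma two_blocks:
  assumes "0 < k" "k < n"
  shows "consecutive_partition n 2 (two_blocks n k)"
    "block (two_blocks n k) 1 = {1..k}" "block (two_blocks n k) 2 = {k+1..n}"
  using assms by (auto simp: consecutive_partition_def two_blocks_def block_def less_Suc_eq
      numeral_2_eq_2)

lemma measure_eq_on_support:
  assumes "A \<inter> set_pmf p = B \<inter> set_pmf p"
  shows "measure_pmf.prob p A = measure_pmf.prob p B"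
  by (metis assms measure_Int_set_pmf)

lemma permutes_eq_on:
  assumes "\<sigma> permutes S" "\<pi> permutes S" "\<forall>i\<in>S. \<sigma> i = \<pi> i"
  shows "\<sigma> = \<pi>"
proof
  fix x show "\<sigma> x = \<pi> x"
    using assms permutes_not_in[OF assms(1)] permutes_not_in[OF assms(2)] by (cases "x \<in> S") auto
qed

lemma permutes_image_complement:
  fixes \<tau> \<tau>' :: "nat \<Rightarrow> nat"
  assumes "\<tau> permutes {1..n}" "\<tau>' permutes {1..n}" "\<tau> ` {1..k} = \<tau>' ` {1..k}" "k \<le> n"
  shows "\<tau> ` {k+1..n} = \<tau>' ` {k+1..n}"
proof -
  have compl: "{k+1..n} = {1..n} - {1..k}" using assms(4) by auto
  have "\<tau> ` {k+1..n} = \<tau> ` {1..n} - \<tau> ` {1..k}"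
    unfolding compl by (rule image_set_diff[OF permutes_inj[OF assms(1)]])
  moreover have "\<tau>' ` {k+1..n} = \<tau>' ` {1..n} - \<tau>' ` {1..k}"
    unfolding compl by (rule image_set_diff[OF permutes_inj[OF assms(2)]])
  ultimately show ?thesis
    using assms(3) permutes_image[OF assms(1)] permutes_image[OF assms(2)] by simp
qed

lemma inv_image_eq_vimage: "\<sigma> permutes S \<Longrightarrow> inv \<sigma> ` B = \<sigma> -` B"
  using bij_vimage_eq_inv_image[OF permutes_bij] by metis

text \<open>Inversion is a bijection on permutations, so it preserves point probabilities.\<close>

lemma pmf_map_inv:
  assumes sup: "set_pmf p \<subseteq> {\<pi>. \<pi> permutes S}" and \<sigma>: "\<sigma> permutes S"
  shows "pmf (map_pmf inv p) (inv \<sigma>) = pmf p \<sigma>"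
proof -
  have inv_eq: "\<tau> = \<tau>'" if "\<tau> permutes S" "\<tau>' permutes S" "inv \<tau> = inv \<tau>'" for \<tau> \<tau>'
    using that(3) permutes_inv_inv[OF that(1)] permutes_inv_inv[OF that(2)] by metis
  show ?thesis
  proof (cases "\<sigma> \<in> set_pmf p")
    case True
    have "inj_on inv (set_pmf p)"
    proof (rule inj_onI)
      fix \<tau> \<tau>' assume "\<tau> \<in> set_pmf p" "\<tau>' \<in> set_pmf p" "inv \<tau> = inv \<tau>'"
      then show "\<tau> = \<tau>'" using inv_eq sup by blast
    qed
    then show ?thesis using True by (rule pmf_map_inj)
  next
    case False
    have "inv \<sigma> \<notin> inv ` set_pmf p"
    proof
      assume "inv \<sigma> \<in> inv ` set_pmf p"
      then obtain \<tau> where "\<tau> \<in> set_pmf p" "inv \<sigma> = inv \<tau>" by auto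
      then show False using inv_eq[OF \<sigma>, of \<tau>] sup False by auto
    qed
    moreover have "pmf p \<sigma> = 0" using False by (simp add: set_pmf_iff)
    ultimately show ?thesis by (simp add: pmf_map_outside)
  qed
qed

lemma cprob_map_pmf: "cprob (map_pmf f p) A B = cprob p (f -` A) (f -` B)"
  unfolding cprob_def by (simp add: vimage_Int)

lemma measure_cond_pmf:
  assumes "set_pmf p \<inter> E \<noteq> {}"
  shows "measure (cond_pmf p E) S = measure p (E \<inter> S) / measure p E"
  unfolding cond_pmf.rep_eq[OF assms]
  by (rule measure_uniform_measure)
     (simp_all add: emeasure_measure_pmf_not_zero[OF assms] measure_pmf.emeasure_finite)

lemma pmf_proportional_eq:
  assumes h: "\<And>x. pmf r x = K * pmf r' x" and fin: "finite (set_pmf r)" and K: "K > 0"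
  shows "r = r'"
proof -
  have sub: "set_pmf r' \<subseteq> set_pmf r"
    using h K by (auto simp: set_pmf_iff)
  have "1 = (\<Sum>x\<in>set_pmf r. pmf r x)" using sum_pmf_eq_1[OF fin] by simp
  also have "\<dots> = K * (\<Sum>x\<in>set_pmf r. pmf r' x)" using h by (simp add: sum_distrib_left)
  also have "(\<Sum>x\<in>set_pmf r. pmf r' x) = 1" using sum_pmf_eq_1[OF fin sub] .
  finally have "K = 1" by simp
  then show ?thesis using h by (intro pmf_eqI) simp
qed

lemma indep_vars_if_joint_Pi_pmf:
  fixes X :: "'i \<Rightarrow> 'a \<Rightarrow> 'b"
  assumes eq: "map_pmf (\<lambda>\<omega>. restrict (\<lambda>i. X i \<omega>) I) q = Pi_pmf I undefined m" and fin: "finite I"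
  shows "prob_space.indep_vars (measure_pmf q) (\<lambda>_. count_space UNIV) X I"
proof (cases "I = {}")
  case True
  show ?thesis
    by (subst prob_space.indep_vars_def [OF measure_pmf.prob_space_axioms],
        subst prob_space.indep_sets_def [OF measure_pmf.prob_space_axioms]) (simp_all add: True)
next
  case False
  define B where "B = (\<lambda>\<omega>. restrict (\<lambda>i. X i \<omega>) I)"
  have ind: "prob_space.indep_vars (measure_pmf (Pi_pmf I undefined m)) (\<lambda>_. count_space UNIV)
      (\<lambda>x f. f x) I"
    by (rule indep_vars_Pi_pmf[OF fin])
  have sig: "sets (count_space UNIV) = sigma_sets (space (count_space UNIV)) (Pow UNIV)"
    by (metis sets_count_space space_count_space sigma_algebra.sigma_sets_eq sigma_algebra_Pow)
  have st: "Int_stable (Pow UNIV)" by (auto simp: Int_stable_def)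
  note finP = prob_space.indep_vars_finite[OF measure_pmf.prob_space_axioms[of "Pi_pmf I undefined m"]
      False fin, where M'="\<lambda>_. count_space UNIV" and E="\<lambda>_. Pow UNIV"]
  note finQ = prob_space.indep_vars_finite[OF measure_pmf.prob_space_axioms[of q]
      False fin, where M'="\<lambda>_. count_space UNIV" and E="\<lambda>_. Pow UNIV"]
  have Pi_indep: "\<forall>A\<in>(\<Pi> i\<in>I. Pow UNIV).
      measure (Pi_pmf I undefined m) (\<Inter>j\<in>I. (\<lambda>f. f j) -` A j \<inter> space (Pi_pmf I undefined m))
       = (\<Prod>j\<in>I. measure (Pi_pmf I undefined m) ((\<lambda>f. f j) -` A j \<inter> space (Pi_pmf I undefined m)))"
    using ind finP[of "\<lambda>x f. f x"] sig st by simp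
  have "\<forall>A\<in>(\<Pi> i\<in>I. Pow UNIV). measure q (\<Inter>j\<in>I. X j -` A j \<inter> space q)
       = (\<Prod>j\<in>I. measure q (X j -` A j \<inter> space q))"
  proof
    fix A :: "'i \<Rightarrow> 'b set" assume A: "A \<in> (\<Pi> i\<in>I. Pow UNIV)"
    have m: "measure (Pi_pmf I undefined m) S = measure q (B -` S)" for S
      using eq unfolding B_def[symmetric] by (metis measure_map_pmf)
    have v1: "B -` (\<Inter>j\<in>I. (\<lambda>f::'i\<Rightarrow>'b. f j) -` A j) = (\<Inter>j\<in>I. X j -` A j)"
      unfolding B_def using False by auto
    have v2: "B -` ((\<lambda>f::'i\<Rightarrow>'b. f j) -` A j) = X j -` A j" if "j \<in> I" for j
      unfolding B_def using that by auto
    have pulled_back: "measure q (B -` (\<Inter>j\<in>I. (\<lambda>f::'i\<Rightarrow>'b. f j) -` A j))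
        = (\<Prod>j\<in>I. measure q (B -` ((\<lambda>f::'i\<Rightarrow>'b. f j) -` A j)))"
      using Pi_indep A m by simp
    have "(\<Prod>j\<in>I. measure q (B -` ((\<lambda>f::'i\<Rightarrow>'b. f j) -` A j))) = (\<Prod>j\<in>I. measure q (X j -` A j))"
      using v2 by (intro prod.cong) auto
    then show "measure q (\<Inter>j\<in>I. X j -` A j \<inter> space q) = (\<Prod>j\<in>I. measure q (X j -` A j \<inter> space q))"
      using pulled_back v1 by simp
  qed
  then show ?thesis using finQ[of X] sig st by simp
qed

lemma indep_vars_two_events:
  assumes ind: "prob_space.indep_vars (measure_pmf Q) (\<lambda>_. count_space UNIV) X I"
    and c: "c1 \<in> I" "c2 \<in> I" "c1 \<noteq> c2"
  shows "measure Q (X c1 -` S1 \<inter> X c2 -` S2) = measure Q (X c1 -` S1) * measure Q (X c2 -` S2)"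
proof -
  define A where "A c = (if c = c1 then S1 else S2)" for c
  have "measure Q (\<Inter>i\<in>{c1, c2}. X i -` A i \<inter> space (measure_pmf Q))
      = (\<Prod>i\<in>{c1, c2}. measure Q (X i -` A i \<inter> space (measure_pmf Q)))"
    by (rule prob_space.indep_varsD[OF measure_pmf.prob_space_axioms ind]) (use c in auto)
  then show ?thesis using c(3) unfolding A_def by (simp add: Int_commute)
qed

section \<open>The chain rule for L-decomposable permutations\<close>

definition next_prob :: "(nat \<Rightarrow> nat) pmf \<Rightarrow> nat \<Rightarrow> nat set \<Rightarrow> nat \<Rightarrow> real" where
  "next_prob p k S a = cprob p {\<sigma>. \<sigma> k = a} {\<sigma>. \<sigma> ` {1..k-1} = S}"

text \<open>L-decomposability is required only for \<open>2 \<le> k \<le> n - 2\<close>; for the remaining \<open>k < n\<close>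
  the defining identity holds for every random permutation: for \<open>k \<le> 1\<close> the two conditioning
  events coincide, and for \<open>k = n - 1\<close> the last value is forced.\<close>

lemma L_decomposable_step:
  assumes Ld: "L_decomposable n p" and sup: "set_pmf p \<subseteq> {\<pi>. \<pi> permutes {1..n}}"
    and pi: "\<pi> permutes {1..n}" and kn: "k < n"
    and pos: "measure_pmf.prob p {\<sigma>. \<forall>i\<in>{1..k}. \<sigma> i = \<pi> i} > 0"
  shows "cprob p {\<sigma>. \<sigma> (k+1) = \<pi> (k+1)} {\<sigma>. \<forall>i\<in>{1..k}. \<sigma> i = \<pi> i}
       = cprob p {\<sigma>. \<sigma> (k+1) = \<pi> (k+1)} {\<sigma>. \<sigma> ` {1..k} = \<pi> ` {1..k}}"
proof -
  define A where "A = {\<sigma>. \<sigma> (k+1) = \<pi> (k+1)}"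
  define Pre where "Pre = {\<sigma>. \<forall>i\<in>{1..k}. \<sigma> i = \<pi> i}"
  define SE where "SE = {\<sigma>. \<sigma> ` {1..k} = \<pi> ` {1..k}}"
  have "2 \<le> k \<and> k + 2 \<le> n \<or> k \<le> 1 \<or> k + 1 = n" using kn by linarith
  then consider "2 \<le> k \<and> k + 2 \<le> n" | "k \<le> 1" | "k + 1 = n" by blast
  then have "cprob p A Pre = cprob p A SE"
  proof cases
    case 1
    then show ?thesis unfolding A_def Pre_def SE_def
      by (intro Ld[unfolded L_decomposable_def, rule_format, of k \<pi>]) (use pi pos in simp)
  next
    case 2
    then have "k = 0 \<or> k = 1" by auto
    then have "Pre = SE" unfolding Pre_def SE_def by (elim disjE) auto
    then show ?thesis by simp
  next
    case 3
    have Pre_SE: "Pre \<inter> set_pmf p \<subseteq> SE" unfolding Pre_def SE_def by auto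
    have SE_A: "SE \<inter> set_pmf p \<subseteq> A"
    proof
      fix \<sigma> assume \<sigma>: "\<sigma> \<in> SE \<inter> set_pmf p"
      then have \<sigma>_img: "\<sigma> ` {1..k} = \<pi> ` {1..k}" and \<sigma>_perm: "\<sigma> permutes {1..n}"
        using sup unfolding SE_def by auto
      have "\<sigma> ` {k+1..n} = \<pi> ` {k+1..n}"
        using permutes_image_complement[OF \<sigma>_perm pi \<sigma>_img] kn by simp
      moreover have "{k+1..n} = {k+1}" using 3 by auto
      ultimately have "{\<sigma> (k+1)} = {\<pi> (k+1)}" by (metis image_empty image_insert)
      then show "\<sigma> \<in> A" unfolding A_def by blast
    qed
    have Pre_A: "Pre \<inter> set_pmf p \<subseteq> A" using Pre_SE SE_A by blast
    have "measure_pmf.prob p (Pre \<inter> set_pmf p) \<le> measure_pmf.prob p (SE \<inter> set_pmf p)"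
      using Pre_SE by (intro measure_pmf.finite_measure_mono) auto
    then have pos_SE: "measure_pmf.prob p SE > 0"
      using pos unfolding Pre_def by (simp add: measure_Int_set_pmf)
    have "measure_pmf.prob p (A \<inter> Pre) = measure_pmf.prob p Pre"
      by (rule measure_eq_on_support) (use Pre_A in blast)
    moreover have "measure_pmf.prob p (A \<inter> SE) = measure_pmf.prob p SE"
      by (rule measure_eq_on_support) (use SE_A in blast)
    ultimately show ?thesis using pos pos_SE unfolding cprob_def Pre_def by simp
  qed
  then show ?thesis unfolding A_def Pre_def SE_def .
qed

lemma prefix_prob:
  assumes Ld: "L_decomposable n p" and sup: "set_pmf p \<subseteq> {\<pi>. \<pi> permutes {1..n}}"
    and pi: "\<pi> permutes {1..n}" and kn: "k \<le> n"
  shows "measure_pmf.prob p {\<sigma>. \<forall>i\<in>{1..k}. \<sigma> i = \<pi> i}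
         = (\<Prod>l\<in>{1..k}. next_prob p l (\<pi> ` {1..l-1}) (\<pi> l))"
  using kn
proof (induction k)
  case (Suc k)
  define Pre where "Pre = {\<sigma>. \<forall>i\<in>{1..k}. \<sigma> i = \<pi> i}"
  define A where "A = {\<sigma>. \<sigma> (Suc k) = \<pi> (Suc k)}"
  have Pre_Suc: "{\<sigma>. \<forall>i\<in>{1..Suc k}. \<sigma> i = \<pi> i} = Pre \<inter> A"
    unfolding Pre_def A_def by (auto simp: atLeastAtMostSuc_conv)
  have factor: "measure_pmf.prob p (Pre \<inter> A)
      = measure_pmf.prob p Pre * next_prob p (Suc k) (\<pi> ` {1..k}) (\<pi> (Suc k))"
  proof (cases "measure_pmf.prob p Pre = 0")
    case True
    have "measure_pmf.prob p (Pre \<inter> A) \<le> measure_pmf.prob p Pre"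
      by (rule measure_pmf.finite_measure_mono) auto
    then show ?thesis using True by (simp add: measure_le_0_iff)
  next
    case False
    then have pos: "measure_pmf.prob p Pre > 0" by (simp add: zero_less_measure_iff)
    moreover have "cprob p A Pre = next_prob p (Suc k) (\<pi> ` {1..k}) (\<pi> (Suc k))"
      using L_decomposable_step[OF Ld sup pi _ pos[unfolded Pre_def]] Suc.prems
      unfolding next_prob_def Pre_def A_def by simp
    ultimately show ?thesis unfolding cprob_def by (simp add: Int_commute field_simps)
  qed
  have IH: "measure_pmf.prob p Pre = (\<Prod>l\<in>{1..k}. next_prob p l (\<pi> ` {1..l-1}) (\<pi> l))"
    using Suc unfolding Pre_def by simp
  have "(\<Prod>l\<in>{1..Suc k}. next_prob p l (\<pi> ` {1..l-1}) (\<pi> l))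
      = (\<Prod>l\<in>{1..k}. next_prob p l (\<pi> ` {1..l-1}) (\<pi> l))
        * next_prob p (Suc k) (\<pi> ` {1..k}) (\<pi> (Suc k))"
    by (simp add: atLeastAtMostSuc_conv mult.commute)
  then show ?case using IH factor unfolding Pre_Suc by simp
qed simp

lemma pmf_chain_rule:
  assumes Ld: "L_decomposable n p" and sup: "set_pmf p \<subseteq> {\<pi>. \<pi> permutes {1..n}}"
    and pi: "\<pi> permutes {1..n}"
  shows "pmf p \<pi> = (\<Prod>l\<in>{1..n}. next_prob p l (\<pi> ` {1..l-1}) (\<pi> l))"
proof -
  have supp_eq: "{\<sigma>. \<forall>i\<in>{1..n}. \<sigma> i = \<pi> i} \<inter> set_pmf p = {\<pi>} \<inter> set_pmf p"
  proof (intro set_eqI iffI)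
    fix \<sigma> assume "\<sigma> \<in> {\<sigma>. \<forall>i\<in>{1..n}. \<sigma> i = \<pi> i} \<inter> set_pmf p"
    then show "\<sigma> \<in> {\<pi>} \<inter> set_pmf p" using sup pi permutes_eq_on[of \<sigma> "{1..n}" \<pi>] by auto
  qed auto
  have "measure_pmf.prob p {\<sigma>. \<forall>i\<in>{1..n}. \<sigma> i = \<pi> i} = pmf p \<pi>"
    using measure_eq_on_support[OF supp_eq] by (simp add: measure_pmf_single)
  then show ?thesis using prefix_prob[OF Ld sup pi, of n] by simp
qed

section \<open>Exchanging rows of a permutation\<close>

text \<open>The algebraic core of the exchange argument: a product of factors \<open>T k\<close> over positions
  \<open>k \<in> N\<close>, where each \<open>w i\<close> takes the \<open>x\<close>-factor on its own block \<open>K i\<close> and the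
  \<open>z\<close>-factor elsewhere, and the blocks partition \<open>N\<close>.\<close>

lemma prod_exchange:
  fixes T :: "nat \<Rightarrow> 'b \<Rightarrow> real"
  assumes "finite N" "finite R" "\<forall>k\<in>N. \<exists>!i. i \<in> R \<and> k \<in> K i"
    "\<forall>i\<in>R. \<forall>k\<in>N. T k (w i) = (if k \<in> K i then T k x else T k z)"
  shows "(\<Prod>k\<in>N. T k x) * (\<Prod>k\<in>N. T k z) ^ card R = (\<Prod>k\<in>N. T k z) * (\<Prod>i\<in>R. \<Prod>k\<in>N. T k (w i))"
proof -
  have "(\<Prod>i\<in>R. \<Prod>k\<in>N. T k (w i)) = (\<Prod>k\<in>N. \<Prod>i\<in>R. T k (w i))" by (rule prod.swap)
  also have "\<dots> = (\<Prod>k\<in>N. T k x * T k z ^ (card R - 1))"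
  proof (rule prod.cong[OF refl])
    fix k assume k: "k \<in> N"
    then obtain i0 where i0: "i0 \<in> R" "k \<in> K i0" "\<And>i. i \<in> R \<Longrightarrow> k \<in> K i \<Longrightarrow> i = i0" using assms(3) by metis
    have "(\<Prod>i\<in>R. T k (w i)) = (\<Prod>i\<in>R. (if k \<in> K i then T k x else T k z))"
      using assms(4) k by auto
    also have "\<dots> = T k x * (\<Prod>i\<in>R - {i0}. (if k \<in> K i then T k x else T k z))"
      using i0(2) by (subst prod.remove[OF assms(2) i0(1)]) simp
    also have "(\<Prod>i\<in>R - {i0}. (if k \<in> K i then T k x else T k z)) = (\<Prod>i\<in>R - {i0}. T k z)"
    proof (intro prod.cong refl)
      fix i assume "i \<in> R - {i0}"
      then have "k \<notin> K i" using i0(3)[of i] by blast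
      then show "(if k \<in> K i then T k x else T k z) = T k z" by simp
    qed
    also have "\<dots> = T k z ^ (card R - 1)" using i0(1) assms(2) by simp
    finally show "(\<Prod>i\<in>R. T k (w i)) = T k x * T k z ^ (card R - 1)" .
  qed
  finally have e: "(\<Prod>i\<in>R. \<Prod>k\<in>N. T k (w i)) = (\<Prod>k\<in>N. T k x * T k z ^ (card R - 1))" .
  show ?thesis
  proof (cases "N = {}")
    case True then show ?thesis by simp
  next
    case False
    then obtain k where "k \<in> N" by auto
    then have cR: "card R \<ge> 1" using assms(2,3) by (metis card_0_eq empty_iff less_one not_le)
    have "(\<Prod>k\<in>N. T k z) * (\<Prod>k\<in>N. T k x * T k z ^ (card R - 1))
        = (\<Prod>k\<in>N. T k z * (T k x * T k z ^ (card R - 1)))" by (simp add: prod.distrib)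
    also have "\<dots> = (\<Prod>k\<in>N. T k x * T k z ^ card R)"
      using cR by (intro prod.cong refl) (metis (no_types, lifting) Suc_diff_le diff_Suc_1 mult.left_commute power_Suc)
    also have "\<dots> = (\<Prod>k\<in>N. T k x) * (\<Prod>k\<in>N. T k z) ^ card R"
      by (simp add: prod.distrib prod_power_distrib)
    finally show ?thesis using e by simp
  qed
qed

lemma prefix_image_eq:
  assumes cp: "consecutive_partition n s kappa" and i: "i \<in> {1..s}"
    and img: "\<forall>i\<in>{1..s}. \<sigma> ` block kappa i = \<sigma>' ` block kappa i"
    and k: "k \<in> block kappa i" and ag: "\<forall>a\<in>block kappa i. a \<le> k \<longrightarrow> \<sigma> a = \<sigma>' a"
  shows "\<sigma> ` {1..k-1} = \<sigma>' ` {1..k-1}" "\<sigma> k = \<sigma>' k"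
proof -
  have k1: "kappa (i-1) < k" "k \<le> kappa i" using k unfolding block_def by auto
  have "{1..k-1} = {1..kappa (i-1)} \<union> {kappa (i-1)+1..k-1}" using k1 by auto
  moreover have "{1..kappa (i-1)} = (\<Union>i'\<in>{1..i-1}. block kappa i')"
    by (rule initial_segment_blocks[OF cp]) (use i in auto)
  moreover have "\<sigma> ` (\<Union>i'\<in>{1..i-1}. block kappa i') = \<sigma>' ` (\<Union>i'\<in>{1..i-1}. block kappa i')"
    unfolding image_UN
  proof (intro SUP_cong refl)
    fix i' assume "i' \<in> {1..i-1}"
    then have "i' \<in> {1..s}" using i by auto
    then show "\<sigma> ` block kappa i' = \<sigma>' ` block kappa i'" using img by blast
  qed
  moreover have "\<sigma> ` {kappa (i-1)+1..k-1} = \<sigma>' ` {kappa (i-1)+1..k-1}"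
    using ag k1 unfolding block_def by (intro image_cong refl) auto
  ultimately show "\<sigma> ` {1..k-1} = \<sigma>' ` {1..k-1}" by (simp add: image_Un)
  show "\<sigma> k = \<sigma>' k" using ag k by auto
qed

text \<open>For an L-decomposable law, every
  chain-rule factor of \<open>w i\<close> is the corresponding factor of \<open>x\<close> or of \<open>z\<close>, whence
  \<open>P(x) P(z)^s = P(z) \<Prod>i P(w i)\<close>.\<close>

lemma row_exchange:
  assumes Ld: "L_decomposable n p" and sup: "set_pmf p \<subseteq> {\<pi>. \<pi> permutes {1..n}}"
    and cp: "consecutive_partition n s kappa"
    and x: "x permutes {1..n}" and z: "z permutes {1..n}" and w: "\<forall>i\<in>{1..s}. w i permutes {1..n}"
    and imgx: "\<forall>i\<in>{1..s}. x ` block kappa i = z ` block kappa i"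
    and imgw: "\<forall>i\<in>{1..s}. \<forall>i'\<in>{1..s}. w i ` block kappa i' = z ` block kappa i'"
    and agx: "\<forall>i\<in>{1..s}. \<forall>a\<in>block kappa i. w i a = x a"
    and agz: "\<forall>i\<in>{1..s}. \<forall>i'\<in>{1..s}. i' \<noteq> i \<longrightarrow> (\<forall>a\<in>block kappa i'. w i a = z a)"
  shows "pmf p x * pmf p z ^ s = pmf p z * (\<Prod>i\<in>{1..s}. pmf p (w i))"
proof -
  define T where "T = (\<lambda>k (\<sigma>::nat\<Rightarrow>nat). next_prob p k (\<sigma> ` {1..k-1}) (\<sigma> k))"
  have pf: "\<And>\<sigma>. \<sigma> permutes {1..n} \<Longrightarrow> pmf p \<sigma> = (\<Prod>k\<in>{1..n}. T k \<sigma>)"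
    unfolding T_def using pmf_chain_rule[OF Ld sup] by simp
  have uniq: "\<forall>k\<in>{1..n}. \<exists>!i. i \<in> {1..s} \<and> k \<in> block kappa i"
    using block_exists[OF cp] block_unique[OF cp] by metis
  have loc: "\<forall>i\<in>{1..s}. \<forall>k\<in>{1..n}. T k (w i) = (if k \<in> block kappa i then T k x else T k z)"
  proof (intro ballI)
    fix i k assume i: "i \<in> {1..s}" and k: "k \<in> {1..n}"
    define i' where "i' = block_index kappa s k"
    have i': "i' \<in> {1..s}" "k \<in> block kappa i'" using block_index[OF cp k] unfolding i'_def by auto
    show "T k (w i) = (if k \<in> block kappa i then T k x else T k z)"
    proof (cases "i' = i")
      case True
      have img2: "\<forall>i\<in>{1..s}. w i' ` block kappa i = x ` block kappa i" using imgw imgx i' by auto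
      have "w i ` {1..k-1} = x ` {1..k-1}" "w i k = x k"
        using prefix_image_eq[OF cp i'(1) img2 i'(2)] agx i' True by auto
      then show ?thesis using True i' unfolding T_def by simp
    next
      case False
      have "k \<notin> block kappa i" using block_unique[OF cp i i'(1) _ i'(2)] False by auto
      have img2: "\<forall>i''\<in>{1..s}. w i ` block kappa i'' = z ` block kappa i''" using imgw i by auto
      have "w i ` {1..k-1} = z ` {1..k-1}" "w i k = z k"
        using prefix_image_eq[OF cp i'(1) img2 i'(2)] agz i' i False by auto
      then show ?thesis using \<open>k \<notin> block kappa i\<close> unfolding T_def by simp
    qed
  qed
  have "(\<Prod>k\<in>{1..n}. T k x) * (\<Prod>k\<in>{1..n}. T k z) ^ card {1..s}
      = (\<Prod>k\<in>{1..n}. T k z) * (\<Prod>i\<in>{1..s}. \<Prod>k\<in>{1..n}. T k (w i))"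
    using prod_exchange[of "{1..n}" "{1..s}" "block kappa" T w x z] uniq loc by simp
  moreover have "(\<Prod>i\<in>{1..s}. pmf p (w i)) = (\<Prod>i\<in>{1..s}. \<Prod>k\<in>{1..n}. T k (w i))"
    using w pf by (intro prod.cong) auto
  ultimately show ?thesis using pf[OF x] pf[OF z] by simp
qed

section \<open>The fibre of the block marginals\<close>

definition cell_graph :: "(nat \<Rightarrow> nat) \<Rightarrow> (nat \<Rightarrow> nat) \<Rightarrow> nat \<times> nat \<Rightarrow> (nat \<Rightarrow> nat)
    \<Rightarrow> (nat \<times> nat) set" where
  "cell_graph kappa lam c \<pi> = graph_block \<pi> (block kappa (fst c)) (block lam (snd c))"

definition marginals :: "nat \<Rightarrow> (nat \<Rightarrow> nat) \<Rightarrow> nat \<Rightarrow> (nat \<Rightarrow> nat) \<Rightarrow> (nat \<Rightarrow> nat)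
    \<Rightarrow> nat set list \<times> nat set list" where
  "marginals s kappa t lam \<pi> =
     (map (\<lambda>i. \<pi> ` block kappa i) [1..<s+1], map (\<lambda>j. inv \<pi> ` block lam j) [1..<t+1])"

text \<open>Every \<open>a \<in> {1..n}\<close> lies in the cell
  \<open>cell a\<close> (row block of \<open>a\<close>, column block of \<open>z a\<close>), and every permutation of the fibre
  maps \<open>a\<close> into that same column block; so a family of fibre elements indexed by cells can be
  glued cell by cell (\<open>patch\<close>) into a new element of the fibre.\<close>

locale fibre =
  fixes n s t :: nat and kappa lam :: "nat \<Rightarrow> nat" and z :: "nat \<Rightarrow> nat"
  assumes kappa_part: "consecutive_partition n s kappa" and lam_part: "consecutive_partition n t lam"
    and z_perm: "z permutes {1..n}"
begin

definition Fib :: "(nat \<Rightarrow> nat) set" where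
  "Fib = {\<sigma>. \<sigma> permutes {1..n} \<and> (\<forall>i\<in>{1..s}. \<sigma> ` block kappa i = z ` block kappa i)
   \<and> (\<forall>j\<in>{1..t}. \<sigma> -` block lam j = z -` block lam j)}"
definition cell :: "nat \<Rightarrow> nat \<times> nat" where
  "cell a = (block_index kappa s a, block_index lam t (z a))"
definition patch :: "(nat \<times> nat \<Rightarrow> nat \<Rightarrow> nat) \<Rightarrow> nat \<Rightarrow> nat" where
  "patch f a = (if a \<in> {1..n} then f (cell a) a else a)"

lemma z_in_Fib: "z \<in> Fib" unfolding Fib_def using z_perm by auto

lemma Fib_permutes: "\<sigma> \<in> Fib \<Longrightarrow> \<sigma> permutes {1..n}" unfolding Fib_def by auto

lemma marginals_eq_iff:
  assumes "\<sigma> permutes {1..n}"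
  shows "marginals s kappa t lam \<sigma> = marginals s kappa t lam z \<longleftrightarrow> \<sigma> \<in> Fib"
proof -
  have "inv \<sigma> ` B = \<sigma> -` B" "inv z ` B = z -` B" for B
    using inv_image_eq_vimage[OF assms] inv_image_eq_vimage[OF z_perm] by auto
  moreover have "set [1..<s+1] = {1..s}" "set [1..<t+1] = {1..t}" by auto
  ultimately show ?thesis unfolding Fib_def marginals_def using assms by (simp add: map_eq_conv)
qed

lemma cell_mem:
  assumes "a \<in> {1..n}"
  shows "cell a \<in> {1..s} \<times> {1..t}" "a \<in> block kappa (fst (cell a))" "z a \<in> block lam (snd (cell a))"
proof -
  have za: "z a \<in> {1..n}" using assms permutes_in_image[OF z_perm, of a] by blast
  show "cell a \<in> {1..s} \<times> {1..t}" "a \<in> block kappa (fst (cell a))" "z a \<in> block lam (snd (cell a))"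
    unfolding cell_def using block_index[OF kappa_part assms] block_index[OF lam_part za] by auto
qed

lemma cell_row: "i \<in> {1..s} \<Longrightarrow> a \<in> block kappa i \<Longrightarrow> fst (cell a) = i"
  using block_index_eq[OF kappa_part] unfolding cell_def by simp

lemma Fib_column:
  assumes "\<sigma> \<in> Fib" "a \<in> {1..n}"
  shows "\<sigma> a \<in> block lam (snd (cell a))"
proof -
  have j: "snd (cell a) \<in> {1..t}" using cell_mem[OF assms(2)] by auto
  have "a \<in> z -` block lam (snd (cell a))" using cell_mem[OF assms(2)] by auto
  moreover have "\<sigma> -` block lam (snd (cell a)) = z -` block lam (snd (cell a))"
    using assms(1) j unfolding Fib_def by blast
  ultimately show ?thesis by blast
qed

lemma Fib_row:
  assumes "\<sigma> \<in> Fib" "a \<in> {1..n}"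
  shows "\<sigma> a \<in> z ` block kappa (fst (cell a))"
proof -
  have "fst (cell a) \<in> {1..s}" using cell_mem[OF assms(2)] by auto
  then have "\<sigma> ` block kappa (fst (cell a)) = z ` block kappa (fst (cell a))"
    using assms(1) unfolding Fib_def by auto
  then show ?thesis using cell_mem(2)[OF assms(2)] by blast
qed

lemma cell_graph_eq:
  assumes col: "\<forall>a\<in>{1..n}. \<sigma> a \<in> block lam (snd (cell a))" and c: "c \<in> {1..s} \<times> {1..t}"
  shows "cell_graph kappa lam c \<sigma> = {(a, \<sigma> a) | a. a \<in> {1..n} \<and> cell a = c}"
proof -
  obtain i j where c': "c = (i, j)" "i \<in> {1..s}" "j \<in> {1..t}" using c by auto
  have "a \<in> block kappa i \<and> \<sigma> a \<in> block lam j \<longleftrightarrow> a \<in> {1..n} \<and> cell a = c" for a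
  proof
    assume h: "a \<in> block kappa i \<and> \<sigma> a \<in> block lam j"
    then have a: "a \<in> {1..n}" using block_subset[OF kappa_part c'(2)] by auto
    have "fst (cell a) = i" using cell_row c'(2) h by auto
    moreover have "snd (cell a) = j"
      using block_unique[OF lam_part, of "snd (cell a)" j "\<sigma> a"] cell_mem(1)[OF a] col a h c'
      by auto
    ultimately show "a \<in> {1..n} \<and> cell a = c" using a c' by (metis prod.collapse)
  next
    assume h: "a \<in> {1..n} \<and> cell a = c"
    then have "a \<in> block kappa (fst (cell a))" "\<sigma> a \<in> block lam (snd (cell a))"
      using cell_mem(2)[of a] col by auto
    then show "a \<in> block kappa i \<and> \<sigma> a \<in> block lam j" using h c' by simp
  qed
  then show ?thesis unfolding cell_graph_def graph_block_def c' by auto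
qed

lemma Fib_respects_columns: "\<sigma> \<in> Fib \<Longrightarrow> \<forall>a\<in>{1..n}. \<sigma> a \<in> block lam (snd (cell a))"
  using Fib_column by auto

lemma cell_graphs_inj:
  assumes "\<sigma> \<in> Fib" "\<sigma>' \<in> Fib" "\<forall>c\<in>{1..s} \<times> {1..t}. cell_graph kappa lam c \<sigma> = cell_graph kappa lam c \<sigma>'"
  shows "\<sigma> = \<sigma>'"
proof (rule permutes_eq_on[OF Fib_permutes[OF assms(1)] Fib_permutes[OF assms(2)]], intro ballI)
  fix a assume a: "a \<in> {1..n}"
  note graph = cell_graph_eq[OF Fib_respects_columns cell_mem(1)[OF a]]
  have "(a, \<sigma> a) \<in> cell_graph kappa lam (cell a) \<sigma>" using graph[OF assms(1)] a by auto
  then have "(a, \<sigma> a) \<in> cell_graph kappa lam (cell a) \<sigma>'" using assms(3) cell_mem(1)[OF a] by auto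
  then show "\<sigma> a = \<sigma>' a" using graph[OF assms(2)] by auto
qed

lemma patch_apply: "a \<in> {1..n} \<Longrightarrow> patch f a = f (cell a) a"
  unfolding patch_def by simp

lemma patch_respects_columns:
  assumes f: "\<forall>c\<in>{1..s} \<times> {1..t}. f c \<in> Fib"
  shows "\<forall>a\<in>{1..n}. patch f a \<in> block lam (snd (cell a))"
proof
  fix a assume a: "a \<in> {1..n}"
  have "f (cell a) \<in> Fib" using bspec[OF f cell_mem(1)[OF a]] .
  then have "f (cell a) a \<in> block lam (snd (cell a))" using Fib_column[OF _ a] by blast
  then show "patch f a \<in> block lam (snd (cell a))" using patch_apply[OF a] by simp
qed

lemma patch_inj_on:
  assumes f: "\<forall>c\<in>{1..s} \<times> {1..t}. f c \<in> Fib"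
  shows "inj_on (patch f) {1..n}"
proof
  fix a a' assume a: "a \<in> {1..n}" and a': "a' \<in> {1..n}" and e: "patch f a = patch f a'"
  have fc: "f (cell a) \<in> Fib" "f (cell a') \<in> Fib" using f cell_mem(1)[OF a] cell_mem(1)[OF a'] by auto
  have ma: "patch f a = f (cell a) a" "patch f a' = f (cell a') a'" using patch_apply a a' by auto
  obtain b b' where b: "b \<in> block kappa (fst (cell a))" "patch f a = z b"
    and b': "b' \<in> block kappa (fst (cell a'))" "patch f a' = z b'"
    using Fib_row[OF fc(1) a] Fib_row[OF fc(2) a'] unfolding ma by auto
  have "b = b'" using b b' e permutes_inj[OF z_perm] by (auto dest: injD)
  then have "fst (cell a) = fst (cell a')"
    using block_unique[OF kappa_part, of "fst (cell a)" "fst (cell a')" b] b b'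
      cell_mem(1)[OF a] cell_mem(1)[OF a'] by auto
  moreover have "snd (cell a) = snd (cell a')"
  proof (rule block_unique[OF lam_part])
    show "snd (cell a) \<in> {1..t}" "snd (cell a') \<in> {1..t}"
      using cell_mem(1)[OF a] cell_mem(1)[OF a'] by auto
    show "patch f a \<in> block lam (snd (cell a))" using patch_respects_columns[OF f] a by blast
    show "patch f a \<in> block lam (snd (cell a'))"
      using patch_respects_columns[OF f] a' unfolding e by blast
  qed
  ultimately have "cell a = cell a'" by (simp add: prod_eq_iff)
  then have "f (cell a) a = f (cell a) a'" using e ma by simp
  then show "a = a'" using permutes_inj[OF Fib_permutes[OF fc(1)]] by (auto dest: injD)
qed

lemma patch_permutes:
  assumes f: "\<forall>c\<in>{1..s} \<times> {1..t}. f c \<in> Fib"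
  shows "patch f permutes {1..n}"
proof -
  have "patch f ` {1..n} \<subseteq> {1..n}"
  proof
    fix v assume "v \<in> patch f ` {1..n}"
    then obtain a where a: "a \<in> {1..n}" "v = f (cell a) a" by (auto simp: patch_apply)
    have "f (cell a) \<in> Fib" using f cell_mem(1)[OF a(1)] by auto
    then show "v \<in> {1..n}" using permutes_in_image[OF Fib_permutes, of "f (cell a)" a] a by blast
  qed
  then have "patch f ` {1..n} = {1..n}" using endo_inj_surj[OF _ _ patch_inj_on[OF f]] by simp
  then have "bij_betw (patch f) {1..n} {1..n}" using patch_inj_on[OF f] by (simp add: bij_betw_def)
  then show ?thesis by (rule bij_imp_permutes) (auto simp: patch_def)
qed

lemma patch_rows:
  assumes f: "\<forall>c\<in>{1..s} \<times> {1..t}. f c \<in> Fib" and i: "i \<in> {1..s}"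
  shows "patch f ` block kappa i = z ` block kappa i"
proof
  show "patch f ` block kappa i \<subseteq> z ` block kappa i"
  proof
    fix v assume "v \<in> patch f ` block kappa i"
    then obtain a where a: "a \<in> block kappa i" "v = patch f a" by auto
    have an: "a \<in> {1..n}" using a block_subset[OF kappa_part i] by auto
    have "f (cell a) \<in> Fib" using f cell_mem(1)[OF an] by auto
    then show "v \<in> z ` block kappa i"
      using Fib_row[OF _ an] cell_row[OF i a(1)] a by (simp add: patch_apply[OF an])
  qed
next
  show "z ` block kappa i \<subseteq> patch f ` block kappa i"
  proof
    fix v assume "v \<in> z ` block kappa i"
    then obtain b where b: "b \<in> block kappa i" "v = z b" by auto
    have "b \<in> {1..n}" using b block_subset[OF kappa_part i] by auto
    then have vn: "v \<in> {1..n}" using permutes_in_image[OF z_perm, of b] b(2) by blast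
    obtain j where j: "j \<in> {1..t}" "v \<in> block lam j" using block_exists[OF lam_part vn] by auto
    have fij: "f (i, j) \<in> Fib" using f i j by auto
    then have "v \<in> f (i, j) ` block kappa i" using b i unfolding Fib_def by auto
    then obtain a where a: "a \<in> block kappa i" "v = f (i, j) a" by auto
    have an: "a \<in> {1..n}" using a block_subset[OF kappa_part i] by auto
    have "snd (cell a) = j"
      using block_unique[OF lam_part, of "snd (cell a)" j v] Fib_column[OF fij an] a j
        cell_mem(1)[OF an] by auto
    then have "cell a = (i, j)" using cell_row[OF i a(1)] by (simp add: prod_eq_iff)
    then have "patch f a = v" using a by (simp add: patch_apply[OF an])
    then show "v \<in> patch f ` block kappa i" using a(1) by (metis image_eqI)
  qed
qed

lemma patch_columns:
  assumes f: "\<forall>c\<in>{1..s} \<times> {1..t}. f c \<in> Fib" and j: "j \<in> {1..t}"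
  shows "patch f -` block lam j = z -` block lam j"
proof (intro set_eqI)
  fix a show "a \<in> patch f -` block lam j \<longleftrightarrow> a \<in> z -` block lam j"
  proof (cases "a \<in> {1..n}")
    case False
    then have "patch f a = a" "z a = a" using permutes_not_in[OF z_perm] by (auto simp: patch_def)
    then show ?thesis by simp
  next
    case True
    have "patch f a \<in> block lam (snd (cell a))" using patch_respects_columns[OF f] True by blast
    moreover have "z a \<in> block lam (snd (cell a))" "snd (cell a) \<in> {1..t}"
      using cell_mem[OF True] by auto
    ultimately show ?thesis using block_unique[OF lam_part _ j] by auto
  qed
qed

lemma patch_in_Fib:
  assumes "\<forall>c\<in>{1..s} \<times> {1..t}. f c \<in> Fib"
  shows "patch f \<in> Fib"
  unfolding Fib_def using patch_permutes patch_rows patch_columns assms by auto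

lemma cell_graph_patch:
  assumes f: "\<forall>c\<in>{1..s} \<times> {1..t}. f c \<in> Fib" and c: "c \<in> {1..s} \<times> {1..t}"
  shows "cell_graph kappa lam c (patch f) = cell_graph kappa lam c (f c)"
proof -
  have "cell_graph kappa lam c (patch f) = {(a, patch f a) | a. a \<in> {1..n} \<and> cell a = c}"
    by (rule cell_graph_eq[OF patch_respects_columns[OF f] c])
  also have "\<dots> = {(a, f c a) | a. a \<in> {1..n} \<and> cell a = c}"
    by (auto simp: patch_apply)
  also have "\<dots> = cell_graph kappa lam c (f c)"
    using cell_graph_eq[OF Fib_respects_columns c, of "f c"] f c by auto
  finally show ?thesis .
qed

definition cell_patch :: "nat \<times> nat \<Rightarrow> (nat \<Rightarrow> nat) \<Rightarrow> nat \<Rightarrow> nat" where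
  "cell_patch c x = patch (\<lambda>c'. if c' = c then x else z)"
definition row_patch :: "nat \<Rightarrow> (nat \<Rightarrow> nat) \<Rightarrow> nat \<Rightarrow> nat" where
  "row_patch i x = patch (\<lambda>c'. if fst c' = i then x else z)"

lemma cell_patch:
  assumes "x \<in> Fib"
  shows "cell_patch c x \<in> Fib"
    "a \<in> {1..n} \<Longrightarrow> cell_patch c x a = (if cell a = c then x a else z a)"
    "c \<in> {1..s} \<times> {1..t} \<Longrightarrow> cell_graph kappa lam c (cell_patch c x) = cell_graph kappa lam c x"
proof -
  have f: "\<forall>c'\<in>{1..s} \<times> {1..t}. (if c' = c then x else z) \<in> Fib" using assms z_in_Fib by auto
  show "cell_patch c x \<in> Fib" unfolding cell_patch_def by (rule patch_in_Fib[OF f])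
  show "a \<in> {1..n} \<Longrightarrow> cell_patch c x a = (if cell a = c then x a else z a)"
    unfolding cell_patch_def by (simp add: patch_apply)
  show "c \<in> {1..s} \<times> {1..t} \<Longrightarrow> cell_graph kappa lam c (cell_patch c x) = cell_graph kappa lam c x"
    unfolding cell_patch_def using cell_graph_patch[OF f] by simp
qed

lemma row_patch:
  assumes "x \<in> Fib"
  shows "row_patch i x \<in> Fib"
    "a \<in> {1..n} \<Longrightarrow> row_patch i x a = (if fst (cell a) = i then x a else z a)"
proof -
  have "\<forall>c'\<in>{1..s} \<times> {1..t}. (if fst c' = i then x else z) \<in> Fib" using assms z_in_Fib by auto
  then show "row_patch i x \<in> Fib" unfolding row_patch_def by (rule patch_in_Fib)
  show "a \<in> {1..n} \<Longrightarrow> row_patch i x a = (if fst (cell a) = i then x a else z a)"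
    unfolding row_patch_def by (simp add: patch_apply)
qed

end

section \<open>The exchange formula on the fibre\<close>

context fibre
begin

lemma row_patch_exchange:
  assumes Ld: "L_decomposable n p" and sup: "set_pmf p \<subseteq> {\<pi>. \<pi> permutes {1..n}}"
    and x: "x \<in> Fib"
  shows "pmf p x * pmf p z ^ s = pmf p z * (\<Prod>i\<in>{1..s}. pmf p (row_patch i x))"
proof (rule row_exchange[OF Ld sup kappa_part Fib_permutes[OF x] z_perm])
  show "\<forall>i\<in>{1..s}. row_patch i x permutes {1..n}" using Fib_permutes row_patch(1)[OF x] by auto
  show "\<forall>i\<in>{1..s}. x ` block kappa i = z ` block kappa i" using x unfolding Fib_def by auto
  show "\<forall>i\<in>{1..s}. \<forall>i'\<in>{1..s}. row_patch i x ` block kappa i' = z ` block kappa i'"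
    using row_patch(1)[OF x] unfolding Fib_def by auto
  show "\<forall>i\<in>{1..s}. \<forall>a\<in>block kappa i. row_patch i x a = x a"
  proof (intro ballI)
    fix i a assume i: "i \<in> {1..s}" and a: "a \<in> block kappa i"
    have "a \<in> {1..n}" using a block_subset[OF kappa_part i] by auto
    then show "row_patch i x a = x a" using row_patch(2)[OF x] cell_row[OF i a] by simp
  qed
  show "\<forall>i\<in>{1..s}. \<forall>i'\<in>{1..s}. i' \<noteq> i \<longrightarrow> (\<forall>a\<in>block kappa i'. row_patch i x a = z a)"
  proof (intro ballI impI)
    fix i i' a assume i': "i' \<in> {1..s}" "i' \<noteq> i" and a: "a \<in> block kappa i'"
    have "a \<in> {1..n}" using a block_subset[OF kappa_part i'(1)] by auto
    then show "row_patch i x a = z a" using row_patch(2)[OF x] cell_row[OF i'(1) a] i'(2) by simp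
  qed
qed

text \<open>Applying the row exchange to the law of \<open>\<Pi>\<^sup>-\<^sup>1\<close> and the partition \<open>\<lambda>\<close> splits a
  row patch further into single-cell patches: the inverse of \<open>cell_patch (i, j) x\<close> agrees with
  the inverse of \<open>row_patch i x\<close> on the column block \<open>j\<close> and with \<open>z\<^sup>-\<^sup>1\<close> elsewhere.\<close>

lemma column_patch_exchange:
  assumes Ldi: "L_decomposable n (map_pmf inv p)" and sup: "set_pmf p \<subseteq> {\<pi>. \<pi> permutes {1..n}}"
    and x: "x \<in> Fib"
  shows "pmf p (row_patch i x) * pmf p z ^ t
       = pmf p z * (\<Prod>j\<in>{1..t}. pmf p (cell_patch (i, j) x))"
proof -
  define w where "w = row_patch i x"
  define v where "v j = cell_patch (i, j) x" for j
  have w: "w \<in> Fib" unfolding w_def by (rule row_patch(1)[OF x])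
  have v: "v j \<in> Fib" for j unfolding v_def by (rule cell_patch(1)[OF x])
  have w_apply: "w a = (if fst (cell a) = i then x a else z a)" if "a \<in> {1..n}" for a
    unfolding w_def using row_patch(2)[OF x that] .
  have v_apply: "v j a = (if cell a = (i, j) then x a else z a)" if "a \<in> {1..n}" for j a
    unfolding v_def using cell_patch(2)[OF x that] .
  have sup_inv: "set_pmf (map_pmf inv p) \<subseteq> {\<pi>. \<pi> permutes {1..n}}"
    using sup by (auto intro: permutes_inv)
  have inv_cols: "inv \<sigma> ` block lam j = inv z ` block lam j" if "\<sigma> \<in> Fib" "j \<in> {1..t}" for \<sigma> j
    using that inv_image_eq_vimage[OF Fib_permutes[OF that(1)]] inv_image_eq_vimage[OF z_perm]
    unfolding Fib_def by auto
  have "pmf (map_pmf inv p) (inv w) * pmf (map_pmf inv p) (inv z) ^ t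
      = pmf (map_pmf inv p) (inv z) * (\<Prod>j\<in>{1..t}. pmf (map_pmf inv p) (inv (v j)))"
  proof (rule row_exchange[OF Ldi sup_inv lam_part])
    show "inv w permutes {1..n}" "inv z permutes {1..n}" "\<forall>j\<in>{1..t}. inv (v j) permutes {1..n}"
      using permutes_inv Fib_permutes[OF w] Fib_permutes[OF v] z_perm by auto
    show "\<forall>j\<in>{1..t}. inv w ` block lam j = inv z ` block lam j" using inv_cols[OF w] by blast
    show "\<forall>j\<in>{1..t}. \<forall>j'\<in>{1..t}. inv (v j) ` block lam j' = inv z ` block lam j'"
      using inv_cols[OF v] by blast
    show "\<forall>j\<in>{1..t}. \<forall>b\<in>block lam j. inv (v j) b = inv w b"
    proof (intro ballI)
      fix j b assume j: "j \<in> {1..t}" and b: "b \<in> block lam j"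
      have wp: "w permutes {1..n}" using Fib_permutes[OF w] .
      define a where "a = inv w b"
      have wa: "w a = b" unfolding a_def using permutes_inverses(1)[OF wp] by simp
      have an: "a \<in> {1..n}"
        unfolding a_def using permutes_in_image[OF permutes_inv[OF wp]] block_subset[OF lam_part j] b
        by blast
      have "snd (cell a) = j"
        using block_unique[OF lam_part, of "snd (cell a)" j b] Fib_column[OF w an] wa cell_mem(1)[OF an]
          j b by auto
      then have "v j a = b" using v_apply[OF an] w_apply[OF an] wa by (auto simp: prod_eq_iff)
      then show "inv (v j) b = inv w b" unfolding a_def[symmetric]
        using permutes_inv_eq[OF Fib_permutes[OF v]] by blast
    qed
    show "\<forall>j\<in>{1..t}. \<forall>j'\<in>{1..t}. j' \<noteq> j \<longrightarrow> (\<forall>b\<in>block lam j'. inv (v j) b = inv z b)"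
    proof (intro ballI impI)
      fix j j' b assume j': "j' \<in> {1..t}" "j' \<noteq> j" and b: "b \<in> block lam j'"
      define a where "a = inv z b"
      have za: "z a = b" unfolding a_def using permutes_inverses(1)[OF z_perm] by simp
      have an: "a \<in> {1..n}"
        unfolding a_def using permutes_in_image[OF permutes_inv[OF z_perm]] block_subset[OF lam_part j'(1)] b
        by blast
      have "snd (cell a) = j'"
        using block_unique[OF lam_part, of "snd (cell a)" j' b] cell_mem(3)[OF an] za cell_mem(1)[OF an]
          j' b by auto
      then have "v j a = b" using v_apply[OF an] za j'(2) by auto
      then show "inv (v j) b = inv z b" unfolding a_def[symmetric]
        using permutes_inv_eq[OF Fib_permutes[OF v]] by blast
    qed
  qed
  moreover have "pmf (map_pmf inv p) (inv \<sigma>) = pmf p \<sigma>" if "\<sigma> \<in> Fib" for \<sigma>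
    by (rule pmf_map_inv[OF sup Fib_permutes[OF that]])
  ultimately show ?thesis using w v z_in_Fib unfolding w_def v_def by simp
qed

lemma cell_patch_exchange:
  assumes Ld: "L_decomposable n p" and Ldi: "L_decomposable n (map_pmf inv p)"
    and sup: "set_pmf p \<subseteq> {\<pi>. \<pi> permutes {1..n}}"
    and x: "x \<in> Fib" and hz: "pmf p z > 0"
  shows "pmf p x * pmf p z ^ (s * t) = pmf p z * (\<Prod>c\<in>{1..s} \<times> {1..t}. pmf p (cell_patch c x))"
proof -
  define H where "H = pmf p z"
  have "pmf p x * H ^ s * H ^ (s * t) = H * ((\<Prod>i\<in>{1..s}. pmf p (row_patch i x)) * H ^ (s * t))"
    using row_patch_exchange[OF Ld sup x] unfolding H_def by simp
  also have "(\<Prod>i\<in>{1..s}. pmf p (row_patch i x)) * H ^ (s * t)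
      = (\<Prod>i\<in>{1..s}. pmf p (row_patch i x) * H ^ t)"
    by (simp add: prod.distrib power_mult[symmetric] mult.commute)
  also have "\<dots> = (\<Prod>i\<in>{1..s}. H * (\<Prod>j\<in>{1..t}. pmf p (cell_patch (i, j) x)))"
    using column_patch_exchange[OF Ldi sup x] unfolding H_def by simp
  also have "\<dots> = H ^ s * (\<Prod>c\<in>{1..s} \<times> {1..t}. pmf p (cell_patch c x))"
    by (simp add: prod.distrib prod.cartesian_product)
  finally have "pmf p x * H ^ (s * t) * H ^ s = H * (\<Prod>c\<in>{1..s} \<times> {1..t}. pmf p (cell_patch c x)) * H ^ s"
    by (simp add: ac_simps)
  then show ?thesis using hz unfolding H_def by simp
qed

end

section \<open>Independence of the cell variables on the fibre\<close>

lemma pmf_map_cond_pmf_inj: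
  assumes inj: "inj_on f A" and sub: "set_pmf p \<inter> D \<subseteq> A" and ne: "set_pmf p \<inter> D \<noteq> {}"
  shows "x \<in> A \<Longrightarrow> pmf (map_pmf f (cond_pmf p D)) (f x) = (if x \<in> D then pmf p x / measure p D else 0)"
    and "y \<notin> f ` A \<Longrightarrow> pmf (map_pmf f (cond_pmf p D)) y = 0"
proof -
  have supp: "set_pmf (cond_pmf p D) = set_pmf p \<inter> D" by (rule set_cond_pmf[OF ne])
  show "pmf (map_pmf f (cond_pmf p D)) (f x) = (if x \<in> D then pmf p x / measure p D else 0)"
    if x: "x \<in> A"
  proof (cases "x \<in> set_pmf p \<inter> D")
    case True
    have "inj_on f (set_pmf (cond_pmf p D))" using inj sub supp by (auto intro: inj_on_subset)
    then show ?thesis using True supp pmf_map_inj[of f "cond_pmf p D" x] pmf_cond[OF ne] by simp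
  next
    case False
    have "f x \<notin> f ` set_pmf (cond_pmf p D)"
      using False x sub supp inj by (auto dest: inj_onD)
    then show ?thesis using False by (auto simp: pmf_map_outside set_pmf_iff)
  qed
  show "pmf (map_pmf f (cond_pmf p D)) y = 0" if "y \<notin> f ` A"
    using that sub supp by (intro pmf_map_outside) auto
qed

context fibre
begin

definition cell_fibre :: "nat \<times> nat \<Rightarrow> (nat \<Rightarrow> nat) set" where
  "cell_fibre c = {\<sigma>\<in>Fib. \<forall>a\<in>{1..n}. cell a \<noteq> c \<longrightarrow> \<sigma> a = z a}"

lemma z_in_cell_fibre: "z \<in> cell_fibre c"
  unfolding cell_fibre_def using z_in_Fib by auto

lemma cell_patch_in_cell_fibre: "x \<in> Fib \<Longrightarrow> cell_patch c x \<in> cell_fibre c"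
  unfolding cell_fibre_def using cell_patch(1,2)[where x=x and c=c] by auto

lemma cell_graph_inj_on_cell_fibre:
  assumes c: "c \<in> {1..s} \<times> {1..t}"
  shows "inj_on (cell_graph kappa lam c) (cell_fibre c)"
proof
  fix \<sigma> \<sigma>' assume \<sigma>: "\<sigma> \<in> cell_fibre c" and \<sigma>': "\<sigma>' \<in> cell_fibre c"
    and eq: "cell_graph kappa lam c \<sigma> = cell_graph kappa lam c \<sigma>'"
  have F: "\<sigma> \<in> Fib" "\<sigma>' \<in> Fib" using \<sigma> \<sigma>' unfolding cell_fibre_def by auto
  show "\<sigma> = \<sigma>'"
  proof (rule permutes_eq_on[OF Fib_permutes[OF F(1)] Fib_permutes[OF F(2)]], intro ballI)
    fix a assume a: "a \<in> {1..n}"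
    show "\<sigma> a = \<sigma>' a"
    proof (cases "cell a = c")
      case True
      note graph = cell_graph_eq[OF Fib_respects_columns c]
      have "(a, \<sigma> a) \<in> cell_graph kappa lam c \<sigma>'" using graph[OF F(1)] eq a True by auto
      then show ?thesis using graph[OF F(2)] by auto
    next
      case False
      then show ?thesis using \<sigma> \<sigma>' a unfolding cell_fibre_def by auto
    qed
  qed
qed

lemma marginals_event_on_support:
  assumes sup: "set_pmf p \<subseteq> {\<pi>. \<pi> permutes {1..n}}"
  shows "set_pmf p \<inter> {\<omega>. marginals s kappa t lam \<omega> = marginals s kappa t lam z} \<subseteq> Fib"
    "Fib \<subseteq> {\<omega>. marginals s kappa t lam \<omega> = marginals s kappa t lam z}"
proof -
  show "set_pmf p \<inter> {\<omega>. marginals s kappa t lam \<omega> = marginals s kappa t lam z} \<subseteq> Fib"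
  proof
    fix \<omega> assume \<omega>: "\<omega> \<in> set_pmf p \<inter> {\<omega>. marginals s kappa t lam \<omega> = marginals s kappa t lam z}"
    then have "\<omega> permutes {1..n}" using sup by blast
    then show "\<omega> \<in> Fib" using \<omega> marginals_eq_iff by blast
  qed
  show "Fib \<subseteq> {\<omega>. marginals s kappa t lam \<omega> = marginals s kappa t lam z}"
    using marginals_eq_iff[OF Fib_permutes] by blast
qed

text \<open>A product law of cell variables charges only cell vectors coming from the fibre: any
  such vector is realised by the patch of its cell-wise realisations.\<close>

lemma Pi_pmf_cells_outside:
  assumes m: "\<And>c y. c \<in> {1..s} \<times> {1..t} \<Longrightarrow> y \<notin> cell_graph kappa lam c ` cell_fibre c
      \<Longrightarrow> pmf (m c) y = 0"
    and g: "g \<notin> (\<lambda>\<omega>. restrict (\<lambda>c. cell_graph kappa lam c \<omega>) ({1..s} \<times> {1..t})) ` Fib"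
  shows "pmf (Pi_pmf ({1..s} \<times> {1..t}) undefined m) g = 0"
proof (rule ccontr)
  define I where "I = {1..s} \<times> {1..t}"
  assume "pmf (Pi_pmf ({1..s} \<times> {1..t}) undefined m) g \<noteq> 0"
  then have ext: "\<forall>c. c \<notin> I \<longrightarrow> g c = undefined" and nz: "(\<Prod>c\<in>I. pmf (m c) (g c)) \<noteq> 0"
    unfolding pmf_Pi[OF finite_SigmaI[OF finite_atLeastAtMost finite_atLeastAtMost]] I_def
    by (auto split: if_splits)
  have "\<forall>c\<in>I. \<exists>\<sigma>\<in>cell_fibre c. cell_graph kappa lam c \<sigma> = g c"
  proof
    fix c assume c: "c \<in> I"
    have "pmf (m c) (g c) \<noteq> 0" using nz c finite_SigmaI unfolding I_def by auto
    then have "g c \<in> cell_graph kappa lam c ` cell_fibre c" using m[of c "g c"] c unfolding I_def by blast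
    then show "\<exists>\<sigma>\<in>cell_fibre c. cell_graph kappa lam c \<sigma> = g c" by (auto simp: image_iff)
  qed
  then obtain f where f: "\<And>c. c \<in> I \<Longrightarrow> f c \<in> cell_fibre c \<and> cell_graph kappa lam c (f c) = g c"
    by metis
  have fF: "\<forall>c\<in>{1..s} \<times> {1..t}. f c \<in> Fib" using f unfolding cell_fibre_def I_def by auto
  have "restrict (\<lambda>c. cell_graph kappa lam c (patch f)) I = g"
  proof
    fix c show "restrict (\<lambda>c. cell_graph kappa lam c (patch f)) I c = g c"
    proof (cases "c \<in> I")
      case True
      then show ?thesis using cell_graph_patch[OF fF True[unfolded I_def]] f[OF True] by simp
    next
      case False
      then show ?thesis using ext by (simp only: restrict_apply) metis
    qed
  qed
  then have "g \<in> (\<lambda>\<omega>. restrict (\<lambda>c. cell_graph kappa lam c \<omega>) I) ` Fib"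
    using patch_in_Fib[OF fF] by (intro image_eqI[of _ _ "patch f"]) simp_all
  then show False using g unfolding I_def by simp
qed

text \<open>The central step of the forward direction: conditionally on the marginals of \<open>z\<close>, the
  joint law of the cell variables is the product of the laws \<open>m c\<close> of the cell variables on
  the cell fibres; both sides are proportional by the exchange formula.\<close>

lemma cond_indep_cells:
  assumes Ld: "L_decomposable n p" and Ldi: "L_decomposable n (map_pmf inv p)"
    and sup: "set_pmf p \<subseteq> {\<pi>. \<pi> permutes {1..n}}" and hz: "z \<in> set_pmf p"
  shows "prob_space.indep_vars
      (measure_pmf (cond_pmf p {\<omega>. marginals s kappa t lam \<omega> = marginals s kappa t lam z}))
      (\<lambda>_. count_space UNIV) (cell_graph kappa lam) ({1..s} \<times> {1..t})"
proof -
  define I where "I = {1..s} \<times> {1..t}"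
  define E where "E = {\<omega>. marginals s kappa t lam \<omega> = marginals s kappa t lam z}"
  define B where "B \<omega> = restrict (\<lambda>c. cell_graph kappa lam c \<omega>) I" for \<omega>
  define m where "m c = map_pmf (cell_graph kappa lam c) (cond_pmf p (cell_fibre c))" for c
  have finI: "finite I" unfolding I_def by simp
  note E_supp = marginals_event_on_support[OF sup, folded E_def]
  have Ene: "set_pmf p \<inter> E \<noteq> {}" and PE: "measure p E > 0"
    using hz E_supp(2) z_in_Fib measure_pmf_posI[OF hz, of E] by auto
  have Dne: "set_pmf p \<inter> cell_fibre c \<noteq> {}" and PD: "measure p (cell_fibre c) > 0" for c
    using hz z_in_cell_fibre[of c] measure_pmf_posI[OF hz z_in_cell_fibre] by auto
  have PDs: "(\<Prod>c\<in>I. measure p (cell_fibre c)) > 0" using PD by (simp add: prod_pos)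
  have Hz: "pmf p z > 0" using hz by (simp add: pmf_positive)
  have B_inj: "inj_on B Fib"
  proof (rule inj_onI)
    fix \<sigma> \<sigma>' assume \<sigma>: "\<sigma> \<in> Fib" "\<sigma>' \<in> Fib" and eq: "B \<sigma> = B \<sigma>'"
    have "\<forall>c\<in>I. cell_graph kappa lam c \<sigma> = cell_graph kappa lam c \<sigma>'"
    proof
      fix c assume "c \<in> I"
      then show "cell_graph kappa lam c \<sigma> = cell_graph kappa lam c \<sigma>'"
        using fun_cong[OF eq, of c] unfolding B_def by simp
    qed
    then show "\<sigma> = \<sigma>'" using cell_graphs_inj[OF \<sigma>] unfolding I_def by blast
  qed
  have m_cell: "pmf (m c) (cell_graph kappa lam c \<omega>) = pmf p (cell_patch c \<omega>) / measure p (cell_fibre c)"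
    if \<omega>: "\<omega> \<in> Fib" and c: "c \<in> I" for c \<omega>
  proof -
    have c': "c \<in> {1..s} \<times> {1..t}" using c unfolding I_def .
    have "pmf (m c) (cell_graph kappa lam c (cell_patch c \<omega>))
        = pmf p (cell_patch c \<omega>) / measure p (cell_fibre c)"
      using pmf_map_cond_pmf_inj(1)[OF cell_graph_inj_on_cell_fibre[OF c'] _ Dne
          cell_patch_in_cell_fibre[OF \<omega>]] cell_patch_in_cell_fibre[OF \<omega>]
      unfolding m_def by simp
    then show ?thesis using cell_patch(3)[OF \<omega> c'] by simp
  qed
  have m_outside: "pmf (m c) y = 0" if "c \<in> {1..s} \<times> {1..t}" "y \<notin> cell_graph kappa lam c ` cell_fibre c"
    for c y
    using pmf_map_cond_pmf_inj(2)[OF cell_graph_inj_on_cell_fibre _ Dne] that unfolding m_def by auto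
  define K where "K = pmf p z * (\<Prod>c\<in>I. measure p (cell_fibre c)) / (pmf p z ^ (s * t) * measure p E)"
  have proportional: "pmf (map_pmf B (cond_pmf p E)) g = K * pmf (Pi_pmf I undefined m) g" for g
  proof (cases "g \<in> B ` Fib")
    case True
    then obtain \<omega> where \<omega>: "\<omega> \<in> Fib" "g = B \<omega>" by auto
    have "pmf (map_pmf B (cond_pmf p E)) g = pmf p \<omega> / measure p E"
      using pmf_map_cond_pmf_inj(1)[OF B_inj E_supp(1) Ene \<omega>(1)] \<omega> E_supp(2) by auto
    moreover have "pmf p \<omega> = pmf p z * (\<Prod>c\<in>I. pmf p (cell_patch c \<omega>)) / pmf p z ^ (s * t)"
      using cell_patch_exchange[OF Ld Ldi sup \<omega>(1) Hz] Hz unfolding I_def by (simp add: eq_divide_eq)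
    moreover have "pmf (Pi_pmf I undefined m) g
        = (\<Prod>c\<in>I. pmf p (cell_patch c \<omega>)) / (\<Prod>c\<in>I. measure p (cell_fibre c))"
    proof -
      have "pmf (Pi_pmf I undefined m) g = (\<Prod>c\<in>I. pmf (m c) (cell_graph kappa lam c \<omega>))"
        unfolding \<omega>(2) pmf_Pi[OF finI] B_def by simp
      also have "\<dots> = (\<Prod>c\<in>I. pmf p (cell_patch c \<omega>) / measure p (cell_fibre c))"
        using m_cell[OF \<omega>(1)] by (rule prod.cong[OF refl])
      finally show ?thesis by (simp add: prod_dividef)
    qed
    moreover have "(H * V / Hst) / PE = (H * PDs / (Hst * PE)) * (V / PDs)"
      if "Hst > 0" "PE > 0" "PDs > 0" for H V Hst PE PDs :: real
      using that by (simp add: field_simps)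
    ultimately show ?thesis using Hz PE PDs unfolding K_def by simp
  next
    case False
    then have "pmf (map_pmf B (cond_pmf p E)) g = 0"
      using pmf_map_cond_pmf_inj(2)[OF B_inj E_supp(1) Ene] by blast
    moreover have "pmf (Pi_pmf I undefined m) g = 0"
      using Pi_pmf_cells_outside[where m=m, OF m_outside] False unfolding B_def I_def by blast
    ultimately show ?thesis by simp
  qed
  have "finite (set_pmf (map_pmf B (cond_pmf p E)))"
  proof -
    have "set_pmf (cond_pmf p E) \<subseteq> {\<pi>. \<pi> permutes {1..n}}" using set_cond_pmf[OF Ene] sup by auto
    then show ?thesis using finite_permutations[of "{1..n}"] finite_subset by auto
  qed
  moreover have "K > 0" unfolding K_def using Hz PDs PE by simp
  ultimately have "map_pmf B (cond_pmf p E) = Pi_pmf I undefined m"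
    using pmf_proportional_eq[OF proportional] by blast
  then show ?thesis using indep_vars_if_joint_Pi_pmf[OF _ finI] unfolding B_def E_def I_def by blast
qed

end

section \<open>The converse direction\<close>

lemma cprob_eq_of_cond_indep_events:
  assumes Ene: "set_pmf p \<inter> E \<noteq> {}"
    and ind: "measure (cond_pmf p E) (F1 \<inter> F2) = measure (cond_pmf p E) F1 * measure (cond_pmf p E) F2"
    and h1: "Pre \<inter> set_pmf p = F1 \<inter> E \<inter> set_pmf p"
    and h2: "A \<inter> E \<inter> set_pmf p = F2 \<inter> E \<inter> set_pmf p"
    and h3: "SE \<inter> set_pmf p = E \<inter> set_pmf p"
    and pos: "measure p Pre > 0"
  shows "cprob p A Pre = cprob p A SE"
proof -
  obtain x where "x \<in> set_pmf p" "x \<in> E" using Ene by auto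
  then have PE: "measure p E > 0" by (rule measure_pmf_posI)
  note mc = measure_cond_pmf[OF Ene]
  have m1: "measure p Pre = measure p (E \<inter> F1)"
    by (rule measure_eq_on_support) (use h1 in blast)
  have m2: "measure p (A \<inter> Pre) = measure p (E \<inter> (F1 \<inter> F2))"
    by (rule measure_eq_on_support) (use h1 h2 in blast)
  have m3: "measure p (A \<inter> SE) = measure p (E \<inter> F2)"
    by (rule measure_eq_on_support) (use h2 h3 in blast)
  have m4: "measure p SE = measure p E"
    by (rule measure_eq_on_support) (use h3 in blast)
  have QF1: "measure (cond_pmf p E) F1 > 0" using mc m1 pos PE by simp
  have "cprob p A Pre = measure (cond_pmf p E) (F1 \<inter> F2) / measure (cond_pmf p E) F1"
    unfolding cprob_def m1 m2 mc using PE by simp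
  also have "\<dots> = measure (cond_pmf p E) F2" using ind QF1 by simp
  also have "\<dots> = cprob p A SE" unfolding cprob_def m3 m4 mc by simp
  finally show ?thesis .
qed

lemma cprob_eq_of_cond_indep_vars:
  assumes ind: "cond_indep_vars p X I Y" and cd: "c \<in> I" "d \<in> I" "c \<noteq> d"
    and Pre: "\<And>\<sigma>. \<sigma> \<in> set_pmf p \<Longrightarrow> \<sigma> \<in> Pre \<longleftrightarrow> X c \<sigma> = X c \<pi> \<and> Y \<sigma> = Y \<pi>"
    and SE: "\<And>\<sigma>. \<sigma> \<in> set_pmf p \<Longrightarrow> \<sigma> \<in> SE \<longleftrightarrow> Y \<sigma> = Y \<pi>"
    and A: "\<And>\<sigma>. \<sigma> \<in> set_pmf p \<Longrightarrow> \<sigma> \<in> A \<longleftrightarrow> X d \<sigma> \<in> S"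
    and pos: "measure p Pre > 0"
  shows "cprob p A Pre = cprob p A SE"
proof -
  define E where "E = {\<sigma>. Y \<sigma> = Y \<pi>}"
  have Ene: "set_pmf p \<inter> E \<noteq> {}"
  proof
    assume "set_pmf p \<inter> E = {}"
    then have "Pre \<inter> set_pmf p = {} \<inter> set_pmf p" using Pre unfolding E_def by auto
    then have "measure p Pre = measure p {}" by (rule measure_eq_on_support)
    then show False using pos by simp
  qed
  then have "measure p {\<sigma>. Y \<sigma> = Y \<pi>} > 0"
    unfolding E_def by (auto intro: measure_pmf_posI)
  then have "prob_space.indep_vars (measure_pmf (cond_pmf p E)) (\<lambda>_. count_space UNIV) X I"
    using ind unfolding cond_indep_vars_def E_def by blast
  from indep_vars_two_events[OF this cd]
  have "measure (cond_pmf p E) (X c -` {X c \<pi>} \<inter> X d -` S)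
      = measure (cond_pmf p E) (X c -` {X c \<pi>}) * measure (cond_pmf p E) (X d -` S)" .
  then show ?thesis
  proof (rule cprob_eq_of_cond_indep_events[OF Ene])
    show "Pre \<inter> set_pmf p = X c -` {X c \<pi>} \<inter> E \<inter> set_pmf p" using Pre unfolding E_def by auto
    show "A \<inter> E \<inter> set_pmf p = X d -` S \<inter> E \<inter> set_pmf p" using A by auto
    show "SE \<inter> set_pmf p = E \<inter> set_pmf p" using SE unfolding E_def by auto
  qed (rule pos)
qed

lemma graph_block_all_columns:
  assumes "\<sigma> permutes {1..n}" "K \<subseteq> {1..n}"
  shows "graph_block \<sigma> K {1..n} = {(a, \<sigma> a) | a. a \<in> K}"
  using assms permutes_in_image[OF assms(1)] unfolding graph_block_def by blast

lemma graph_block_all_rows: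
  assumes "\<sigma> permutes {1..n}" "L \<subseteq> {1..n}"
  shows "graph_block \<sigma> {1..n} L = {(inv \<sigma> b, b) | b. b \<in> L}"
proof -
  have "(a, \<sigma> a) \<in> {(inv \<sigma> b, b) | b. b \<in> L}" if "\<sigma> a \<in> L" for a
    using that permutes_inverses(2)[OF assms(1)] by (metis (mono_tags, lifting) mem_Collect_eq)
  moreover have "(inv \<sigma> b, b) \<in> graph_block \<sigma> {1..n} L" if "b \<in> L" for b
  proof -
    have "inv \<sigma> b \<in> {1..n}" using that assms permutes_in_image[OF permutes_inv[OF assms(1)]] by blast
    moreover have "\<sigma> (inv \<sigma> b) = b" using permutes_inverses(1)[OF assms(1)] by simp
    ultimately show ?thesis using that unfolding graph_block_def by force
  qed
  ultimately show ?thesis unfolding graph_block_def by blast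
qed

lemma graph_eq_iff: "{(a, f a) | a. a \<in> K} = {(a, g a) | a. a \<in> K} \<longleftrightarrow> (\<forall>a\<in>K. f a = g a)"
  by (auto simp: set_eq_iff)

lemma inverse_graph_eq_iff: "{(f b, b) | b. b \<in> K} = {(g b, b) | b. b \<in> K} \<longleftrightarrow> (\<forall>b\<in>K. f b = g b)"
  by (auto simp: set_eq_iff)

lemma upt_one_two: "[1..<1+1] = [1::nat]" "[1..<2+1] = [1::nat, 2]"
  by (simp_all add: upt_rec)

lemma marginals_split_rows:
  assumes k: "0 < k" "k < n" and \<sigma>: "\<sigma> permutes {1..n}" and \<pi>: "\<pi> permutes {1..n}"
  shows "marginals 2 (two_blocks n k) 1 (one_block n) \<sigma> = marginals 2 (two_blocks n k) 1 (one_block n) \<pi>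
    \<longleftrightarrow> \<sigma> ` {1..k} = \<pi> ` {1..k}"
proof
  assume e: "\<sigma> ` {1..k} = \<pi> ` {1..k}"
  have "\<sigma> ` {k+1..n} = \<pi> ` {k+1..n}" using permutes_image_complement[OF \<sigma> \<pi> e] k by simp
  moreover have "inv \<sigma> ` {1..n} = inv \<pi> ` {1..n}"
    using permutes_image[OF permutes_inv[OF \<sigma>]] permutes_image[OF permutes_inv[OF \<pi>]] by simp
  ultimately show "marginals 2 (two_blocks n k) 1 (one_block n) \<sigma> = marginals 2 (two_blocks n k) 1 (one_block n) \<pi>"
    unfolding marginals_def upt_one_two using e two_blocks[OF k] one_block[of n] k by simp
next
  assume "marginals 2 (two_blocks n k) 1 (one_block n) \<sigma> = marginals 2 (two_blocks n k) 1 (one_block n) \<pi>"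
  then show "\<sigma> ` {1..k} = \<pi> ` {1..k}"
    unfolding marginals_def upt_one_two using two_blocks[OF k] by simp
qed

lemma marginals_split_columns:
  assumes k: "0 < k" "k < n" and \<sigma>: "\<sigma> permutes {1..n}" and \<pi>: "\<pi> permutes {1..n}"
  shows "marginals 1 (one_block n) 2 (two_blocks n k) \<sigma> = marginals 1 (one_block n) 2 (two_blocks n k) \<pi>
    \<longleftrightarrow> inv \<sigma> ` {1..k} = inv \<pi> ` {1..k}"
proof
  assume e: "inv \<sigma> ` {1..k} = inv \<pi> ` {1..k}"
  have "inv \<sigma> ` {k+1..n} = inv \<pi> ` {k+1..n}"
    using permutes_image_complement[OF permutes_inv[OF \<sigma>] permutes_inv[OF \<pi>] e] k by simp
  moreover have "\<sigma> ` {1..n} = \<pi> ` {1..n}" using permutes_image[OF \<sigma>] permutes_image[OF \<pi>] by simp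
  ultimately show "marginals 1 (one_block n) 2 (two_blocks n k) \<sigma> = marginals 1 (one_block n) 2 (two_blocks n k) \<pi>"
    unfolding marginals_def upt_one_two using e two_blocks[OF k] one_block[of n] k by simp
next
  assume "marginals 1 (one_block n) 2 (two_blocks n k) \<sigma> = marginals 1 (one_block n) 2 (two_blocks n k) \<pi>"
  then show "inv \<sigma> ` {1..k} = inv \<pi> ` {1..k}"
    unfolding marginals_def upt_one_two using two_blocks[OF k] by simp
qed

definition cells_cond_indep :: "nat \<Rightarrow> (nat \<Rightarrow> nat) pmf \<Rightarrow> bool" where
  "cells_cond_indep n p \<longleftrightarrow> (\<forall>s t kappa lam. consecutive_partition n s kappa \<and> consecutive_partition n t lam
     \<longrightarrow> cond_indep_vars p (cell_graph kappa lam) ({1..s} \<times> {1..t}) (marginals s kappa t lam))"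

text \<open>Converse direction for \<open>\<Pi>\<close>: take the row partition \<open>{1..k}, {k+1..n}\<close> and the trivial
  column partition. The prefix \<open>\<Pi>(1:k)\<close> is the cell variable of the first cell, \<open>\<Pi>(k+1)\<close>
  is read off the second cell, and the marginals are determined by \<open>\<Pi>{1:k}\<close>.\<close>

lemma L_decomposable_if_cells_cond_indep:
  assumes sup: "set_pmf p \<subseteq> {\<pi>. \<pi> permutes {1..n}}" and R: "cells_cond_indep n p"
  shows "L_decomposable n p"
  unfolding L_decomposable_def
proof (intro allI impI)
  fix k \<pi> assume H: "2 \<le> k \<and> k + 2 \<le> n \<and> \<pi> permutes {1..n} \<and>
        measure_pmf.prob p {\<sigma>. \<forall>i\<in>{1..k}. \<sigma> i = \<pi> i} > 0"
  then have k: "0 < k" "k < n" and \<pi>: "\<pi> permutes {1..n}" by auto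
  define kappa where "kappa = two_blocks n k"
  define lam where "lam = one_block n"
  have ind: "cond_indep_vars p (cell_graph kappa lam) ({1..2} \<times> {1..1}) (marginals 2 kappa 1 lam)"
    using R two_blocks(1)[OF k] one_block(1)[of n] k unfolding cells_cond_indep_def kappa_def lam_def
    by (meson order.strict_trans)
  have cells: "cell_graph kappa lam (1, 1) \<sigma> = {(a, \<sigma> a) | a. a \<in> {1..k}}"
    "cell_graph kappa lam (2, 1) \<sigma> = {(a, \<sigma> a) | a. a \<in> {k+1..n}}" if "\<sigma> permutes {1..n}" for \<sigma>
    using graph_block_all_columns[OF that] two_blocks[OF k] one_block[of n] k
    unfolding cell_graph_def kappa_def lam_def by auto
  have perm: "\<sigma> permutes {1..n}" if "\<sigma> \<in> set_pmf p" for \<sigma> using that sup by auto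
  note marg = marginals_split_rows[OF k perm \<pi>, folded kappa_def lam_def]
  show "cprob p {\<sigma>. \<sigma> (k + 1) = \<pi> (k + 1)} {\<sigma>. \<forall>i\<in>{1..k}. \<sigma> i = \<pi> i}
      = cprob p {\<sigma>. \<sigma> (k + 1) = \<pi> (k + 1)} {\<sigma>. \<sigma> ` {1..k} = \<pi> ` {1..k}}"
  proof (rule cprob_eq_of_cond_indep_vars[where c = "(1, 1)" and d = "(2, 1)" and \<pi> = \<pi>
        and S = "{g. (k + 1, \<pi> (k + 1)) \<in> g}", OF ind])
    fix \<sigma> assume \<sigma>: "\<sigma> \<in> set_pmf p"
    show "\<sigma> \<in> {\<sigma>. \<forall>i\<in>{1..k}. \<sigma> i = \<pi> i} \<longleftrightarrow>
        cell_graph kappa lam (1, 1) \<sigma> = cell_graph kappa lam (1, 1) \<pi> \<and>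
        marginals 2 kappa 1 lam \<sigma> = marginals 2 kappa 1 lam \<pi>"
      unfolding cells(1)[OF perm[OF \<sigma>]] cells(1)[OF \<pi>] graph_eq_iff marg[OF \<sigma>] by auto
    show "\<sigma> \<in> {\<sigma>. \<sigma> ` {1..k} = \<pi> ` {1..k}} \<longleftrightarrow> marginals 2 kappa 1 lam \<sigma> = marginals 2 kappa 1 lam \<pi>"
      using marg[OF \<sigma>] by simp
    show "\<sigma> \<in> {\<sigma>. \<sigma> (k + 1) = \<pi> (k + 1)} \<longleftrightarrow> cell_graph kappa lam (2, 1) \<sigma> \<in> {g. (k + 1, \<pi> (k + 1)) \<in> g}"
      unfolding cells(2)[OF perm[OF \<sigma>]] using k by auto
  qed (use H in auto)
qed

lemma L_decomposable_inv_if_cells_cond_indep: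
  assumes sup: "set_pmf p \<subseteq> {\<pi>. \<pi> permutes {1..n}}" and R: "cells_cond_indep n p"
  shows "L_decomposable n (map_pmf inv p)"
  unfolding L_decomposable_def cprob_map_pmf
proof (intro allI impI)
  fix k \<pi> assume H: "2 \<le> k \<and> k + 2 \<le> n \<and> \<pi> permutes {1..n} \<and>
        measure_pmf.prob (map_pmf inv p) {\<sigma>. \<forall>i\<in>{1..k}. \<sigma> i = \<pi> i} > 0"
  then have k: "0 < k" "k < n" and \<pi>: "\<pi> permutes {1..n}" by auto
  define \<pi>' where "\<pi>' = inv \<pi>"
  have \<pi>': "\<pi>' permutes {1..n}" "inv \<pi>' = \<pi>"
    unfolding \<pi>'_def using permutes_inv[OF \<pi>] permutes_inv_inv[OF \<pi>] by auto
  define kappa where "kappa = one_block n"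
  define lam where "lam = two_blocks n k"
  have ind: "cond_indep_vars p (cell_graph kappa lam) ({1..1} \<times> {1..2}) (marginals 1 kappa 2 lam)"
    using R two_blocks(1)[OF k] one_block(1)[of n] k unfolding cells_cond_indep_def kappa_def lam_def
    by (meson order.strict_trans)
  have cells: "cell_graph kappa lam (1, 1) \<sigma> = {(inv \<sigma> b, b) | b. b \<in> {1..k}}"
    "cell_graph kappa lam (1, 2) \<sigma> = {(inv \<sigma> b, b) | b. b \<in> {k+1..n}}" if "\<sigma> permutes {1..n}" for \<sigma>
    using graph_block_all_rows[OF that] two_blocks[OF k] one_block[of n] k
    unfolding cell_graph_def kappa_def lam_def by auto
  have perm: "\<sigma> permutes {1..n}" if "\<sigma> \<in> set_pmf p" for \<sigma> using that sup by auto
  note marg = marginals_split_columns[OF k perm \<pi>'(1), folded kappa_def lam_def, unfolded \<pi>'(2)]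
  show "cprob p (inv -` {\<sigma>. \<sigma> (k + 1) = \<pi> (k + 1)}) (inv -` {\<sigma>. \<forall>i\<in>{1..k}. \<sigma> i = \<pi> i})
      = cprob p (inv -` {\<sigma>. \<sigma> (k + 1) = \<pi> (k + 1)}) (inv -` {\<sigma>. \<sigma> ` {1..k} = \<pi> ` {1..k}})"
  proof (rule cprob_eq_of_cond_indep_vars[where c = "(1, 1)" and d = "(1, 2)" and \<pi> = \<pi>'
        and S = "{g. (\<pi> (k + 1), k + 1) \<in> g}", OF ind])
    fix \<sigma> assume \<sigma>: "\<sigma> \<in> set_pmf p"
    show "\<sigma> \<in> inv -` {\<sigma>. \<forall>i\<in>{1..k}. \<sigma> i = \<pi> i} \<longleftrightarrow>
        cell_graph kappa lam (1, 1) \<sigma> = cell_graph kappa lam (1, 1) \<pi>' \<and>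
        marginals 1 kappa 2 lam \<sigma> = marginals 1 kappa 2 lam \<pi>'"
      unfolding cells(1)[OF perm[OF \<sigma>]] cells(1)[OF \<pi>'(1)] \<pi>'(2) inverse_graph_eq_iff marg[OF \<sigma>]
      by auto
    show "\<sigma> \<in> inv -` {\<sigma>. \<sigma> ` {1..k} = \<pi> ` {1..k}} \<longleftrightarrow>
        marginals 1 kappa 2 lam \<sigma> = marginals 1 kappa 2 lam \<pi>'"
      using marg[OF \<sigma>] by simp
    show "\<sigma> \<in> inv -` {\<sigma>. \<sigma> (k + 1) = \<pi> (k + 1)} \<longleftrightarrow>
        cell_graph kappa lam (1, 2) \<sigma> \<in> {g. (\<pi> (k + 1), k + 1) \<in> g}"
      unfolding cells(2)[OF perm[OF \<sigma>]] using k by auto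
  qed (use H in auto)
qed

text \<open>The forward direction: conditioning on a value \<open>y\<close> of the marginals of positive
  probability means conditioning on the fibre of some \<open>z\<close> in the support with these marginals.\<close>

lemma cells_cond_indep_if_bi_decomposable:
  assumes sup: "set_pmf p \<subseteq> {\<pi>. \<pi> permutes {1..n}}" and bi: "bi_decomposable n p"
  shows "cells_cond_indep n p"
  unfolding cells_cond_indep_def cond_indep_vars_def
proof (intro allI impI)
  fix s t kappa lam y
  assume parts: "consecutive_partition n s kappa \<and> consecutive_partition n t lam"
    and pos: "measure p {\<omega>. marginals s kappa t lam \<omega> = y} > 0"
  have "set_pmf p \<inter> {\<omega>. marginals s kappa t lam \<omega> = y} \<noteq> {}"
  proof
    assume "set_pmf p \<inter> {\<omega>. marginals s kappa t lam \<omega> = y} = {}"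
    then have "measure p {\<omega>. marginals s kappa t lam \<omega> = y} = measure p {}"
      by (intro measure_eq_on_support) auto
    then show False using pos by simp
  qed
  then obtain z where z: "z \<in> set_pmf p" "marginals s kappa t lam z = y" by blast
  interpret fibre n s t kappa lam z
    using parts z(1) sup by unfold_locales auto
  show "prob_space.indep_vars (measure_pmf (cond_pmf p {\<omega>. marginals s kappa t lam \<omega> = y}))
      (\<lambda>_. count_space UNIV) (cell_graph kappa lam) ({1..s} \<times> {1..t})"
    using cond_indep_cells[OF _ _ sup z(1)] bi z(2) unfolding bi_decomposable_def by blast
qed

lemma cell_graph_case_prod:
  "(\<lambda>(i, j) \<pi>. graph_block \<pi> (block kappa i) (block lam j)) = cell_graph kappa lam"
  unfolding cell_graph_def case_prod_beta' ..

theorem proposition3: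
  fixes n :: nat and p :: "(nat \<Rightarrow> nat) pmf"
  assumes "set_pmf p \<subseteq> {\<pi>. \<pi> permutes {1..n}}"
  shows "bi_decomposable n p \<longleftrightarrow>
    (\<forall>s t kappa lam. consecutive_partition n s kappa \<and> consecutive_partition n t lam \<longrightarrow>
       cond_indep_vars p
         (\<lambda>(i, j) \<pi>. graph_block \<pi> (block kappa i) (block lam j))
         ({1..s} \<times> {1..t})
         (\<lambda>\<pi>. (map (\<lambda>i. \<pi> ` block kappa i) [1..<s+1],
                map (\<lambda>j. inv \<pi> ` block lam j) [1..<t+1])))"
  unfolding cell_graph_case_prod marginals_def[symmetric] cells_cond_indep_def[symmetric]
  using cells_cond_indep_if_bi_decomposable[OF assms] L_decomposable_if_cells_cond_indep[OF assms]
    L_decomposable_inv_if_cells_cond_indep[OF assms]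
  unfolding bi_decomposable_def by blast

end
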